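(* For $g\ge1$ and $k\ge2$, the level-$k$ subgroup $\mathrm{Mod}(S_g)[k]$ is a normal subgroup of $\mathrm{LMod}_{p_k}(S_g)$.
   Context: $S_g$ is the closed orientable surface of genus $g$, $\mathrm{Mod}(S_g)$ its mapping class group. Fix simple closed curves $a_1,b_1,\dots,a_g,b_g$ whose classes form a standard symplectic basis of $H_1(S_g,\mathbb Z)$. $\Psi_k:\mathrm{Mod}(S_g)\to\mathrm{Sp}(2g,\mathbb Z_k)$ is the action on $H_1(S_g,\mathbb Z_k)$, and $\mathrm{Mod}(S_g)[k]=\ker\Psi_k$. $p_k:S_{k(g-1)+1}\to S_g$ is the connected regular $k$-sheeted cover with deck group $\mathbb Z_k$ corresponding to the kernel of the epimorphism $\pi_1(S_g)\to\mathbb Z_k$ sending $b_1\mapsto1$ and $a_1,a_2,b_2,\dots,a_g,b_g\mapsto0$. $\mathrm{LMod}_{p_k}(S_g)$ is the set of mapping classes represented by a homeomorphism of $S_g$ that lifts to a homeomorphism of $S_{k(g-1)+1}$ through $p_k$. *)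

theory Defs
  imports "HOL-Analysis.Analysis" "HOL-Homology.Homology"
begin

text \<open>Orientable: its second integral homology group is infinite
  cyclic (for closed connected surfaces this is equivalent to orientability).\<close>

definition closed_surface :: "'a topology \<Rightarrow> bool" where
  "closed_surface X \<longleftrightarrow> topspace X \<noteq> {} \<and> compact_space X \<and> connected_space X \<and> Hausdorff_space X
     \<and> (\<forall>x\<in>topspace X. \<exists>U. openin X U \<and> x \<in> U \<and>
            subtopology X U homeomorphic_space Euclidean_space 2)"

definition orientable_closed_surface :: "'a topology \<Rightarrow> bool" where
  "orientable_closed_surface X \<longleftrightarrow> closed_surface X \<and> homology_group 2 X \<cong> integer_group"

definition loop_simplex :: "(real \<Rightarrow> 'a) \<Rightarrow> (nat \<Rightarrow> real) \<Rightarrow> 'a" where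
  "loop_simplex \<gamma> = restrict (\<lambda>x. \<gamma> (x 1)) (standard_simplex 1)"

definition loop_class :: "'a topology \<Rightarrow> (real \<Rightarrow> 'a) \<Rightarrow> 'a chain set" where
  "loop_class X \<gamma> = homologous_rel_set 1 X {} (frag_of (loop_simplex \<gamma>))"

definition simple_closed_curve :: "'a topology \<Rightarrow> (real \<Rightarrow> 'a) \<Rightarrow> bool" where
  "simple_closed_curve X \<gamma> \<longleftrightarrow> pathin X \<gamma> \<and> \<gamma> 0 = \<gamma> 1 \<and> inj_on \<gamma> {0..<1}"

definition hcomb :: "'a topology \<Rightarrow> nat \<Rightarrow> (nat \<Rightarrow> real \<Rightarrow> 'a) \<Rightarrow> (nat \<Rightarrow> real \<Rightarrow> 'a)
                     \<Rightarrow> (nat \<Rightarrow> int) \<Rightarrow> (nat \<Rightarrow> int) \<Rightarrow> 'a chain set" where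
  "hcomb X g a b n m =
     finprod (homology_group 1 X)
       (\<lambda>i. (loop_class X (a i) [^]\<^bsub>homology_group 1 X\<^esub> n i)
            \<otimes>\<^bsub>homology_group 1 X\<^esub> (loop_class X (b i) [^]\<^bsub>homology_group 1 X\<^esub> m i)) {1..g}"

definition homology_basis :: "'a topology \<Rightarrow> nat \<Rightarrow> (nat \<Rightarrow> real \<Rightarrow> 'a) \<Rightarrow> (nat \<Rightarrow> real \<Rightarrow> 'a) \<Rightarrow> bool" where
  "homology_basis X g a b \<longleftrightarrow>
     (\<forall>c \<in> carrier (homology_group 1 X).
        \<exists>!nm. nm \<in> ({1..g} \<rightarrow>\<^sub>E UNIV) \<times> ({1..g} \<rightarrow>\<^sub>E UNIV) \<and> c = hcomb X g a b (fst nm) (snd nm))"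

text \<open>The homomorphism H_1(S_g;Z) -> Z_k with b_1 -> 1 and all other basis classes -> 0
  (through which pi_1 -> Z_k factors): its kernel, i.e. classes whose b_1-coefficient is
  divisible by k.\<close>

definition in_ker_phi :: "'a topology \<Rightarrow> nat \<Rightarrow> (nat \<Rightarrow> real \<Rightarrow> 'a) \<Rightarrow> (nat \<Rightarrow> real \<Rightarrow> 'a)
                           \<Rightarrow> nat \<Rightarrow> 'a chain set \<Rightarrow> bool" where
  "in_ker_phi X g a b k c \<longleftrightarrow>
     (\<exists>n m. n \<in> {1..g} \<rightarrow>\<^sub>E UNIV \<and> m \<in> {1..g} \<rightarrow>\<^sub>E UNIV \<and> c = hcomb X g a b n m
            \<and> int k dvd m 1)"

definition covering_map :: "'b topology \<Rightarrow> 'a topology \<Rightarrow> ('b \<Rightarrow> 'a) \<Rightarrow> bool" where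
  "covering_map Y X p \<longleftrightarrow> continuous_map Y X p \<and> p ` topspace Y = topspace X \<and>
     (\<forall>x \<in> topspace X. \<exists>U. openin X U \<and> x \<in> U \<and>
        (\<exists>\<V>. \<Union>\<V> = {y \<in> topspace Y. p y \<in> U} \<and> pairwise disjnt \<V> \<and>
             (\<forall>V \<in> \<V>. openin Y V \<and> homeomorphic_map (subtopology Y V) (subtopology X U) p)))"

text \<open>The regular cover p : Y -> X corresponding to the kernel of pi_1(X) -> Z_k
  (b_1 -> 1, others -> 0): a connected covering in which a loop of X lifts to a closed
  loop (from any starting point over its base point) iff its class lies in the kernel.\<close>

definition cover_of_ker_phi :: "'b topology \<Rightarrow> 'a topology \<Rightarrow> ('b \<Rightarrow> 'a) \<Rightarrow> nat
                                \<Rightarrow> (nat \<Rightarrow> real \<Rightarrow> 'a) \<Rightarrow> (nat \<Rightarrow> real \<Rightarrow> 'a) \<Rightarrow> nat \<Rightarrow> bool" where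
  "cover_of_ker_phi Y X p g a b k \<longleftrightarrow> covering_map Y X p \<and> connected_space Y \<and>
     (\<forall>\<gamma> y. pathin X \<gamma> \<and> \<gamma> 0 = \<gamma> 1 \<and> y \<in> topspace Y \<and> p y = \<gamma> 0 \<longrightarrow>
        ((\<exists>\<delta>. pathin Y \<delta> \<and> \<delta> 0 = y \<and> \<delta> 1 = y \<and> (\<forall>t\<in>{0..1}. p (\<delta> t) = \<gamma> t))
          \<longleftrightarrow> in_ker_phi X g a b k (loop_class X \<gamma>)))"

definition orient_pres_homeos :: "'a topology \<Rightarrow> ('a \<Rightarrow> 'a) set" where
  "orient_pres_homeos X = {f. homeomorphic_map X X f \<and> f \<in> extensional (topspace X) \<and>
      (\<forall>c \<in> carrier (homology_group 2 X). hom_induced 2 X {} X {} f c = c)}"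

definition isotopic :: "'a topology \<Rightarrow> ('a \<Rightarrow> 'a) \<Rightarrow> ('a \<Rightarrow> 'a) \<Rightarrow> bool" where
  "isotopic X f h \<longleftrightarrow> (\<exists>H. continuous_map (prod_topology (top_of_set {0..1::real}) X) X H \<and>
      (\<forall>x\<in>topspace X. H (0, x) = f x \<and> H (1, x) = h x) \<and>
      (\<forall>t\<in>{0..1}. homeomorphic_map X X (\<lambda>x. H (t, x))))"

definition mclass :: "'a topology \<Rightarrow> ('a \<Rightarrow> 'a) \<Rightarrow> ('a \<Rightarrow> 'a) set" where
  "mclass X f = {h \<in> orient_pres_homeos X. isotopic X f h}"

definition MCG :: "'a topology \<Rightarrow> ('a \<Rightarrow> 'a) set monoid" where
  "MCG X = \<lparr>carrier = mclass X ` orient_pres_homeos X,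
            monoid.mult = (\<lambda>A B. mclass X (compose (topspace X) (SOME f. f \<in> A) (SOME h. h \<in> B))),
            one = mclass X (restrict id (topspace X))\<rparr>"

text \<open>Level-k subgroup: kernel of the action on H_1(X;Z_k) = H_1(X;Z)/k H_1(X;Z)
  (universal coefficients; H_0 is free).\<close>

definition acts_trivially_mod :: "'a topology \<Rightarrow> nat \<Rightarrow> ('a \<Rightarrow> 'a) \<Rightarrow> bool" where
  "acts_trivially_mod X k f \<longleftrightarrow>
     (\<forall>c \<in> carrier (homology_group 1 X). \<exists>d \<in> carrier (homology_group 1 X).
        hom_induced 1 X {} X {} f c = c \<otimes>\<^bsub>homology_group 1 X\<^esub> (d [^]\<^bsub>homology_group 1 X\<^esub> k))"

definition level_subgroup :: "'a topology \<Rightarrow> nat \<Rightarrow> ('a \<Rightarrow> 'a) set set" where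
  "level_subgroup X k = {C \<in> carrier (MCG X). \<exists>f\<in>C. acts_trivially_mod X k f}"

definition lifts_to_homeo :: "'b topology \<Rightarrow> 'a topology \<Rightarrow> ('b \<Rightarrow> 'a) \<Rightarrow> ('a \<Rightarrow> 'a) \<Rightarrow> bool" where
  "lifts_to_homeo Y X p f \<longleftrightarrow>
     (\<exists>h. homeomorphic_map Y Y h \<and> (\<forall>y\<in>topspace Y. p (h y) = f (p y)))"

definition LMod :: "'b topology \<Rightarrow> 'a topology \<Rightarrow> ('b \<Rightarrow> 'a) \<Rightarrow> ('a \<Rightarrow> 'a) set set" where
  "LMod Y X p = {C \<in> carrier (MCG X). \<exists>f\<in>C. lifts_to_homeo Y X p f}"

end

theory Submission
  imports Defs
begin

text \<open>
  The level subgroup is the kernel of the action on homology modulo \<open>k\<close>, hence normal in the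
  whole mapping class group, and a normal subgroup contained in a subgroup stays normal there.
  So it suffices to show that every level-\<open>k\<close> mapping class lifts. A homeomorphism \<open>f\<close> acting
  trivially modulo \<open>k\<close> changes every class by a \<open>k\<close>-th multiple, so \<open>f\<^sub>*\<close> and \<open>(f\<^sup>-\<^sup>1)\<^sub>*\<close>
  preserve the kernel of \<open>H\<^sub>1 \<rightarrow> \<int>/k\<close> given by the \<open>b\<^sub>1\<close>-coefficient. As \<open>p\<^sub>k\<close> is the regular
  cover of this kernel, \<open>f\<close> and \<open>f\<^sup>-\<^sup>1\<close> map loops that lift to closed loops to such loops, and
  the lifting criterion lifts both maps; with matching base points the two lifts are mutually
  inverse by uniqueness of lifts.
\<close>

section \<open>Paths in an abstract topology\<close>

text \<open>The library's \<open>joinpaths\<close> requires a type of class \<open>topological_space\<close>; here paths take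
  values in an arbitrary topology.\<close>

definition path_join :: "(real \<Rightarrow> 'a) \<Rightarrow> (real \<Rightarrow> 'a) \<Rightarrow> real \<Rightarrow> 'a" where
  "path_join d1 d2 = (\<lambda>t. if t \<le> 1/2 then d1 (2 * t) else d2 (2 * t - 1))"

lemma path_join_0 [simp]: "path_join d1 d2 0 = d1 0"
  and path_join_1 [simp]: "path_join d1 d2 1 = d2 1"
  by (auto simp: path_join_def)

lemma pathin_reparam:
  assumes "pathin X d" "continuous_on {0..1} r" "r \<in> {0..1} \<rightarrow> {0..1}"
  shows "pathin X (\<lambda>t. d (r t))"
proof -
  have "continuous_map (top_of_set {0..1}) (top_of_set {0..1}) r"
    using assms(2,3) by simp
  then show ?thesis
    using pathin_compose[of "top_of_set {0..1}" r X d] assms(1) unfolding pathin_def by (simp add: o_def)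
qed

lemma pathin_path_join:
  assumes d1: "pathin X d1" and d2: "pathin X d2" and "d1 1 = d2 0"
  shows "pathin X (path_join d1 d2)"
proof -
  let ?I = "top_of_set {0..1::real}"
  have "continuous_map ?I X (\<lambda>t. if t \<le> 1/2 then (d1 \<circ> (\<lambda>t. 2 * t)) t else (d2 \<circ> (\<lambda>t. 2 * t - 1)) t)"
  proof (intro continuous_map_cases_le continuous_map_compose, force, force)
    show "continuous_map (subtopology ?I {t \<in> topspace ?I. t \<le> 1/2}) ?I ((*) 2)"
      by (auto simp: continuous_map_in_subtopology continuous_map_from_subtopology)
    have "continuous_map (subtopology ?I {t. 0 \<le> t \<and> t \<le> 1 \<and> 1 \<le> t * 2}) euclideanreal (\<lambda>t. 2 * t - 1)"
      by (intro continuous_intros) (force intro: continuous_map_from_subtopology)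
    then show "continuous_map (subtopology ?I {t \<in> topspace ?I. 1/2 \<le> t}) ?I (\<lambda>t. 2 * t - 1)"
      by (force simp: continuous_map_in_subtopology)
    show "(d1 \<circ> (*) 2) t = (d2 \<circ> (\<lambda>t. 2 * t - 1)) t" if "t = 1/2" for t
    proof -
      have "2 * t = 1" "2 * t - 1 = 0"
        using that by simp_all
      then show ?thesis
        using assms(3) by simp
    qed
  qed (use d1 d2 in \<open>auto simp: pathin_def\<close>)
  then show ?thesis
    unfolding pathin_def path_join_def by (simp add: o_def cong: if_cong)
qed

lemma path_join_related:
  assumes "\<forall>t\<in>{0..1}. F (e1 t) = G (d1 t)" "\<forall>t\<in>{0..1}. F (e2 t) = G (d2 t)"
  shows "\<forall>t\<in>{0..1}. F (path_join e1 e2 t) = G (path_join d1 d2 t)"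
proof
  fix t :: real assume "t \<in> {0..1}"
  then show "F (path_join e1 e2 t) = G (path_join d1 d2 t)"
    using assms by (cases "t \<le> 1/2") (auto simp: path_join_def)
qed

lemma continuous_map_locally:
  assumes "\<And>y. y \<in> topspace Y \<Longrightarrow> \<exists>N. openin Y N \<and> y \<in> N \<and> continuous_map (subtopology Y N) Z h"
  shows "continuous_map Y Z h"
proof (rule pasting_lemma)
  let ?I = "{N. openin Y N \<and> continuous_map (subtopology Y N) Z h}"
  show "\<exists>N. N \<in> ?I \<and> y \<in> N \<and> h y = h y" if "y \<in> topspace Y" for y
    using assms[OF that] by blast
qed auto

lemma locally_path_connected_space_locally:
  assumes "\<And>x. x \<in> topspace X \<Longrightarrow> \<exists>U. openin X U \<and> x \<in> U \<and> locally_path_connected_space (subtopology X U)"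
  shows "locally_path_connected_space X"
  unfolding locally_path_connected_space
proof (intro allI impI, elim conjE)
  fix V x assume V: "openin X V" "x \<in> V"
  then have "x \<in> topspace X"
    using openin_subset by blast
  then obtain U where U: "openin X U" "x \<in> U" "locally_path_connected_space (subtopology X U)"
    using assms by blast
  have "openin (subtopology X U) (V \<inter> U)"
    using V(1) by (simp add: openin_subtopology_Int)
  then obtain W where W: "openin (subtopology X U) W" "path_connectedin (subtopology X U) W" "x \<in> W" "W \<subseteq> V \<inter> U"
    using U V(2) unfolding locally_path_connected_space by blast
  have "openin X W"
    using W(1) U(1) openin_open_subtopology by blast
  moreover have "path_connectedin X W"
    using W(2) by (simp add: path_connectedin_subtopology)
  ultimately show "\<exists>W. openin X W \<and> path_connectedin X W \<and> x \<in> W \<and> W \<subseteq> V"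
    using W(3,4) by blast
qed

lemma closed_surface_locally_path_connected:
  assumes "closed_surface X"
  shows "locally_path_connected_space X"
proof (rule locally_path_connected_space_locally)
  fix x assume "x \<in> topspace X"
  then obtain U where U: "openin X U" "x \<in> U" "subtopology X U homeomorphic_space Euclidean_space 2"
    using assms unfolding closed_surface_def by blast
  then have "locally_path_connected_space (subtopology X U)"
    using homeomorphic_locally_path_connected_space locally_path_connected_Euclidean_space by blast
  then show "\<exists>U. openin X U \<and> x \<in> U \<and> locally_path_connected_space (subtopology X U)"
    using U by blast
qed

lemma pathin_subdivision_in_cover:
  assumes "pathin X \<gamma>" and cover: "\<And>x. x \<in> topspace X \<Longrightarrow> \<exists>U. P U \<and> openin X U \<and> x \<in> U"
  shows "\<exists>n>0. \<forall>m<n. \<exists>U. P U \<and> \<gamma> ` {real m / n..real (Suc m) / n} \<subseteq> U"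
proof -
  have cont: "continuous_map (top_of_set {0..1}) X \<gamma>"
    using assms(1) by (simp add: pathin_def)
  define \<G> where "\<G> = {B. open B \<and> (\<exists>U. P U \<and> \<gamma> ` ({0..1} \<inter> B) \<subseteq> U)}"
  have "{0..1} \<subseteq> \<Union>\<G>"
  proof
    fix t :: real assume t: "t \<in> {0..1}"
    then obtain U where U: "P U" "openin X U" "\<gamma> t \<in> U"
      using cover path_image_subset_topspace[OF assms(1)] by blast
    have "openin (top_of_set {0..1}) {s \<in> topspace (top_of_set {0..1}). \<gamma> s \<in> U}"
      using openin_continuous_map_preimage[OF cont U(2)] .
    then obtain B where "open B" "{s \<in> {0..1}. \<gamma> s \<in> U} = {0..1} \<inter> B"
      unfolding openin_open by auto
    then show "t \<in> \<Union>\<G>"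
      unfolding \<G>_def using U t by blast
  qed
  then obtain e where e: "e > 0" "\<And>x. x \<in> {0..1} \<Longrightarrow> \<exists>G\<in>\<G>. ball x e \<subseteq> G"
    by (rule Heine_Borel_lemma[OF compact_Icc]) (auto simp: \<G>_def)
  obtain n where n: "n > 0" "inverse (real n) < e"
    using real_arch_inverse e(1) by blast
  have "\<exists>U. P U \<and> \<gamma> ` {real m / n..real (Suc m) / n} \<subseteq> U" if "m < n" for m
  proof -
    have a: "0 \<le> real m / n" "real m / n \<le> 1" "real (Suc m) / n \<le> 1"
      using that by (auto simp: field_simps)
    then obtain G where "G \<in> \<G>" "ball (real m / n) e \<subseteq> G"
      using e(2)[of "real m / n"] by auto
    moreover have "{real m / n..real (Suc m) / n} \<subseteq> {0..1} \<inter> ball (real m / n) e"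
    proof
      fix s assume s: "s \<in> {real m / n..real (Suc m) / n}"
      have "real (Suc m) / n - real m / n = inverse (real n)"
        using n(1) by (simp add: field_simps)
      moreover have "0 \<le> s"
        using s a(1) by (meson atLeastAtMost_iff order_trans)
      ultimately show "s \<in> {0..1} \<inter> ball (real m / n) e"
        using s a n(2) by (auto simp: dist_real_def)
    qed
    ultimately show ?thesis
      unfolding \<G>_def by blast
  qed
  then show ?thesis
    using n(1) by blast
qed

section \<open>Covering maps\<close>

lemma covering_map_continuous: "covering_map Y X p \<Longrightarrow> continuous_map Y X p"
  by (simp add: covering_map_def)

lemma covering_map_in_topspace: "covering_map Y X p \<Longrightarrow> y \<in> topspace Y \<Longrightarrow> p y \<in> topspace X"
  using covering_map_continuous continuous_map_image_subset_topspace by blast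

definition evenly_covered :: "'b topology \<Rightarrow> 'a topology \<Rightarrow> ('b \<Rightarrow> 'a) \<Rightarrow> 'a set \<Rightarrow> bool" where
  "evenly_covered Y X p U \<longleftrightarrow> openin X U \<and>
     (\<exists>\<V>. \<Union>\<V> = {y \<in> topspace Y. p y \<in> U} \<and> pairwise disjnt \<V> \<and>
          (\<forall>V \<in> \<V>. openin Y V \<and> homeomorphic_map (subtopology Y V) (subtopology X U) p))"

lemma covering_map_evenly_covered:
  assumes "covering_map Y X p" "x \<in> topspace X"
  obtains U where "evenly_covered Y X p U" "x \<in> U"
  using assms unfolding covering_map_def evenly_covered_def by blast

lemma sheet_section:
  assumes "openin Y V" "openin X U" "homeomorphic_map (subtopology Y V) (subtopology X U) p"
  obtains s where "continuous_map (subtopology X U) Y s"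
    "\<And>x. x \<in> U \<Longrightarrow> s x \<in> V \<and> p (s x) = x" "\<And>y. y \<in> V \<Longrightarrow> s (p y) = y"
proof -
  obtain s where s: "homeomorphic_maps (subtopology Y V) (subtopology X U) p s"
    using assms(3) homeomorphic_map_maps by blast
  have V: "topspace (subtopology Y V) = V" and U: "topspace (subtopology X U) = U"
    using assms(1,2) openin_subset by (auto simp: topspace_subtopology)
  have s_cont: "continuous_map (subtopology X U) (subtopology Y V) s"
    using s by (simp add: homeomorphic_maps_def)
  show thesis
  proof
    show "continuous_map (subtopology X U) Y s"
      using s_cont continuous_map_in_subtopology by blast
    show "s x \<in> V \<and> p (s x) = x" if "x \<in> U" for x
      using s_cont s that V U unfolding homeomorphic_maps_def continuous_map_def by auto
    show "s (p y) = y" if "y \<in> V" for y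
      using s that V unfolding homeomorphic_maps_def by auto
  qed
qed

lemma evenly_covered_sheet:
  assumes "evenly_covered Y X p U" "y \<in> topspace Y" "p y \<in> U"
  obtains V where "openin Y V" "y \<in> V" "homeomorphic_map (subtopology Y V) (subtopology X U) p"
proof -
  obtain \<V> where \<V>: "\<Union>\<V> = {y \<in> topspace Y. p y \<in> U}"
    "\<forall>V \<in> \<V>. openin Y V \<and> homeomorphic_map (subtopology Y V) (subtopology X U) p"
    using assms(1) unfolding evenly_covered_def by (elim conjE exE) (rule that; assumption)
  have "y \<in> \<Union>\<V>"
    using assms(2,3) \<V>(1) by simp
  then obtain V where "V \<in> \<V>" "y \<in> V"
    by blast
  with \<V>(2) show thesis
    by (intro that) auto
qed

lemma evenly_covered_section:
  assumes U: "evenly_covered Y X p U" and "y \<in> topspace Y" "p y \<in> U"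
  obtains V s where "openin Y V" "y \<in> V" "continuous_map (subtopology X U) Y s"
    "\<And>x. x \<in> U \<Longrightarrow> s x \<in> V \<and> p (s x) = x" "\<And>y. y \<in> V \<Longrightarrow> s (p y) = y"
proof -
  obtain V where V: "openin Y V" "y \<in> V" "homeomorphic_map (subtopology Y V) (subtopology X U) p"
    using evenly_covered_sheet[OF assms] .
  moreover have "openin X U"
    using U by (simp add: evenly_covered_def)
  ultimately obtain s where "continuous_map (subtopology X U) Y s"
    "\<And>x. x \<in> U \<Longrightarrow> s x \<in> V \<and> p (s x) = x" "\<And>y. y \<in> V \<Longrightarrow> s (p y) = y"
    using sheet_section[of Y V X U p] by blast
  with V(1,2) show thesis
    by (rule that)
qed

lemma covering_map_locally_path_connected:
  assumes cov: "covering_map Y X p" and lpc: "locally_path_connected_space X"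
  shows "locally_path_connected_space Y"
proof (rule locally_path_connected_space_locally)
  fix y assume y: "y \<in> topspace Y"
  obtain U where U: "evenly_covered Y X p U" "p y \<in> U"
    using covering_map_evenly_covered[OF cov covering_map_in_topspace[OF cov y]] .
  obtain V where V: "openin Y V" "y \<in> V" "homeomorphic_map (subtopology Y V) (subtopology X U) p"
    using evenly_covered_sheet[OF U(1) y U(2)] .
  have "locally_path_connected_space (subtopology X U)"
    using lpc U(1) by (simp add: evenly_covered_def locally_path_connected_space_open_subset)
  then have "locally_path_connected_space (subtopology Y V)"
    using homeomorphic_locally_path_connected_space[OF homeomorphic_map_imp_homeomorphic_space[OF V(3)]] by blast
  then show "\<exists>V. openin Y V \<and> y \<in> V \<and> locally_path_connected_space (subtopology Y V)"
    using V(1,2) by blast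
qed

lemma covering_map_lifts_locally_agree_or_differ:
  assumes cov: "covering_map Y X p" and d1: "pathin Y d1" and d2: "pathin Y d2"
    and eq: "\<forall>t\<in>{0..1}. p (d1 t) = p (d2 t)" and t: "t \<in> {0..1}"
  obtains T where "openin (top_of_set {0..1}) T" "t \<in> T" "(\<forall>s\<in>T. d1 s = d2 s) \<or> (\<forall>s\<in>T. d1 s \<noteq> d2 s)"
proof -
  let ?I = "top_of_set {0..1::real}"
  have dt: "d1 t \<in> topspace Y" "d2 t \<in> topspace Y"
    using t path_image_subset_topspace d1 d2 by blast+
  obtain U where "evenly_covered Y X p U" "p (d1 t) \<in> U"
    using covering_map_evenly_covered[OF cov covering_map_in_topspace[OF cov dt(1)]] .
  then obtain \<V> where \<V>: "\<Union>\<V> = {y \<in> topspace Y. p y \<in> U}" "pairwise disjnt \<V>"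
    "\<forall>V \<in> \<V>. openin Y V \<and> homeomorphic_map (subtopology Y V) (subtopology X U) p"
    unfolding evenly_covered_def by (elim conjE exE) (rule that; assumption)
  have "d1 t \<in> \<Union>\<V>" "d2 t \<in> \<Union>\<V>"
    using \<V>(1) dt eq t \<open>p (d1 t) \<in> U\<close> by auto
  then obtain V1 V2 where V12: "V1 \<in> \<V>" "d1 t \<in> V1" "V2 \<in> \<V>" "d2 t \<in> V2"
    by blast
  define T where "T = {s \<in> topspace ?I. d1 s \<in> V1} \<inter> {s \<in> topspace ?I. d2 s \<in> V2}"
  have "openin ?I T"
    unfolding T_def using d1 d2 V12 \<V>(3)
    by (intro openin_Int openin_continuous_map_preimage) (auto simp: pathin_def)
  moreover have "t \<in> T"
    using t V12 by (simp add: T_def)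
  moreover have "(\<forall>s\<in>T. d1 s = d2 s) \<or> (\<forall>s\<in>T. d1 s \<noteq> d2 s)"
  proof (cases "V1 = V2")
    case True
    have "inj_on p (topspace (subtopology Y V1))"
      using \<V>(3) V12(1) homeomorphic_imp_injective_map by blast
    then have "inj_on p V1"
      using \<V>(3) V12(1) openin_subset by (metis topspace_subtopology_subset)
    then show ?thesis
      using True eq by (auto simp: T_def inj_on_def)
  next
    case False
    then have "V1 \<inter> V2 = {}"
      using \<V>(2) V12 unfolding pairwise_def disjnt_def by blast
    then show ?thesis
      by (auto simp: T_def)
  qed
  ultimately show thesis
    by (rule that)
qed

lemma covering_map_lift_unique:
  assumes cov: "covering_map Y X p" and d1: "pathin Y d1" and d2: "pathin Y d2"
    and eq: "\<forall>t\<in>{0..1}. p (d1 t) = p (d2 t)" and start: "d1 0 = d2 0"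
  shows "\<forall>t\<in>{0..1}. d1 t = d2 t"
proof -
  let ?I = "top_of_set {0..1::real}"
  define A where "A = {t\<in>{0..1}. d1 t = d2 t}"
  have local: "\<exists>T. openin ?I T \<and> t \<in> T \<and> (T \<subseteq> A \<or> T \<subseteq> {0..1} - A)" if t: "t \<in> {0..1}" for t
  proof -
    obtain T where T: "openin ?I T" "t \<in> T" "(\<forall>s\<in>T. d1 s = d2 s) \<or> (\<forall>s\<in>T. d1 s \<noteq> d2 s)"
      using covering_map_lifts_locally_agree_or_differ[OF cov d1 d2 eq t] .
    moreover have "T \<subseteq> {0..1}"
      using openin_subset[OF T(1)] by simp
    ultimately show ?thesis
      unfolding A_def by blast
  qed
  have "openin ?I A"
    unfolding openin_subopen[of _ A] using local by (fastforce simp: A_def)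
  moreover have "openin ?I ({0..1} - A)"
    unfolding openin_subopen[of _ "{0..1} - A"] using local by fastforce
  then have "closedin ?I A"
    by (auto simp: closedin_def A_def)
  moreover have "connected_space ?I"
    by (simp add: connected_space_iff_is_interval_1 is_interval_cc)
  moreover have "0 \<in> A"
    using start by (simp add: A_def)
  ultimately have "A = {0..1}"
    unfolding connected_space_clopen_in by auto
  then show ?thesis
    by (auto simp: A_def)
qed

lemma lift_path_extend:
  assumes \<gamma>: "pathin X \<gamma>" and \<delta>: "pathin Y \<delta>" and lift: "\<forall>t\<in>{0..1}. p (\<delta> t) = \<gamma> (min t a)"
    and ab: "0 \<le> a" "a \<le> b" "b \<le> 1"
    and U: "evenly_covered Y X p U" "\<gamma> ` {a..b} \<subseteq> U"
  shows "\<exists>\<delta>'. pathin Y \<delta>' \<and> \<delta>' 0 = \<delta> 0 \<and> (\<forall>t\<in>{0..1}. p (\<delta>' t) = \<gamma> (min t b))"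
proof -
  let ?I = "top_of_set {0..1::real}"
  let ?R = "subtopology ?I {t \<in> topspace ?I. a \<le> t}"
  have \<gamma>U: "\<gamma> t \<in> U" if "a \<le> t" "t \<le> b" for t
    using U(2) that by auto
  have da: "\<delta> a \<in> topspace Y"
    using path_image_subset_topspace[OF \<delta>] ab by auto
  have pda: "p (\<delta> a) = \<gamma> a"
    using lift ab by simp
  obtain V s where Vs: "\<delta> a \<in> V" "continuous_map (subtopology X U) Y s"
    "\<And>x. x \<in> U \<Longrightarrow> s x \<in> V \<and> p (s x) = x" "\<And>y. y \<in> V \<Longrightarrow> s (p y) = y"
    by (rule evenly_covered_section[OF U(1) da]) (use pda \<gamma>U[of a] ab in simp_all)
  have sa: "s (\<gamma> a) = \<delta> a"
    using Vs(1,4) pda by metis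
  have "pathin X (\<lambda>t. \<gamma> (min t b))"
    using \<gamma> by (rule pathin_reparam) (use ab in \<open>auto intro!: continuous_intros\<close>)
  then have "continuous_map ?R (subtopology X U) (\<lambda>t. \<gamma> (min t b))"
    using \<gamma>U ab by (auto simp: continuous_map_in_subtopology pathin_def intro: continuous_map_from_subtopology)
  then have right: "continuous_map ?R Y (\<lambda>t. s (\<gamma> (min t b)))"
    using continuous_map_compose[OF _ Vs(2)] by (simp add: o_def)
  have left: "continuous_map (subtopology ?I {t \<in> topspace ?I. t \<le> a}) Y \<delta>"
    using \<delta> unfolding pathin_def by (rule continuous_map_from_subtopology)
  define \<delta>' where "\<delta>' = (\<lambda>t. if t \<le> a then \<delta> t else s (\<gamma> (min t b)))"
  have "continuous_map ?I Y \<delta>'"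
    unfolding \<delta>'_def
  proof (rule continuous_map_cases_le[OF _ _ left right])
    show "continuous_map ?I euclideanreal (\<lambda>x. x)"
      by (rule continuous_map_from_subtopology) (simp add: continuous_map_id[unfolded id_def])
    show "\<delta> x = s (\<gamma> (min x b))" if "x = a" for x
      using that ab sa by simp
  qed simp
  moreover have "\<delta>' 0 = \<delta> 0"
    using ab by (simp add: \<delta>'_def)
  moreover have "p (\<delta>' t) = \<gamma> (min t b)" if "t \<in> {0..1}" for t
  proof (cases "t \<le> a")
    case True
    then show ?thesis
      using lift that ab by (simp add: \<delta>'_def min_def)
  next
    case False
    then show ?thesis
      using Vs(3) \<gamma>U[of "min t b"] ab by (simp add: \<delta>'_def)
  qed
  ultimately show ?thesis
    unfolding pathin_def by blast
qed

lemma covering_map_lift_path: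
  assumes cov: "covering_map Y X p" and \<gamma>: "pathin X \<gamma>" and y: "y \<in> topspace Y" "p y = \<gamma> 0"
  shows "\<exists>\<delta>. pathin Y \<delta> \<and> \<delta> 0 = y \<and> (\<forall>t\<in>{0..1}. p (\<delta> t) = \<gamma> t)"
proof -
  have "\<exists>U. evenly_covered Y X p U \<and> openin X U \<and> x \<in> U" if x: "x \<in> topspace X" for x
  proof -
    obtain U where "evenly_covered Y X p U" "x \<in> U"
      using covering_map_evenly_covered[OF cov x] .
    moreover have "openin X U"
      using calculation(1) by (simp add: evenly_covered_def)
    ultimately show ?thesis
      by blast
  qed
  then obtain n where n: "n > 0" and pieces: "\<And>m. m < n \<Longrightarrow>
      \<exists>U. evenly_covered Y X p U \<and> \<gamma> ` {real m / n..real (Suc m) / n} \<subseteq> U"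
    using pathin_subdivision_in_cover[OF \<gamma>, of "evenly_covered Y X p"] by blast
  have "\<exists>\<delta>. pathin Y \<delta> \<and> \<delta> 0 = y \<and> (\<forall>t\<in>{0..1}. p (\<delta> t) = \<gamma> (min t (real m / n)))" if "m \<le> n" for m
    using that
  proof (induction m)
    case 0
    show ?case
      using y by (intro exI[of _ "\<lambda>t. y"]) auto
  next
    case (Suc m)
    then obtain \<delta> where \<delta>: "pathin Y \<delta>" "\<delta> 0 = y" "\<forall>t\<in>{0..1}. p (\<delta> t) = \<gamma> (min t (real m / n))"
      by auto
    obtain U where U: "evenly_covered Y X p U" "\<gamma> ` {real m / n..real (Suc m) / n} \<subseteq> U"
      using pieces[of m] Suc.prems by auto
    have "0 \<le> real m / n" "real m / n \<le> real (Suc m) / n" "real (Suc m) / n \<le> 1"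
      using Suc.prems by (auto simp: divide_right_mono)
    then show ?case
      using lift_path_extend[OF \<gamma> \<delta>(1,3) _ _ _ U] \<delta>(2) by auto
  qed
  from this[of n] show ?thesis
    using n by auto
qed

lemma covering_map_lift_mapped_path:
  assumes cov: "covering_map Y X p" and f: "continuous_map X X f" and \<delta>: "pathin Y \<delta>"
    and y: "y \<in> topspace Y" "p y = f (p (\<delta> 0))"
  shows "\<exists>\<epsilon>. pathin Y \<epsilon> \<and> \<epsilon> 0 = y \<and> (\<forall>t\<in>{0..1}. p (\<epsilon> t) = f (p (\<delta> t)))"
proof -
  have "pathin X (\<lambda>t. f (p (\<delta> t)))"
    using pathin_compose[OF pathin_compose[OF \<delta> covering_map_continuous[OF cov]] f] by (simp add: o_def)
  then show ?thesis
    using covering_map_lift_path[OF cov _ y(1)] y(2) by simp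
qed

definition lifts_to_closed_loop :: "'b topology \<Rightarrow> ('b \<Rightarrow> 'a) \<Rightarrow> (real \<Rightarrow> 'a) \<Rightarrow> 'b \<Rightarrow> bool" where
  "lifts_to_closed_loop Y p \<gamma> y \<longleftrightarrow> (\<exists>\<delta>. pathin Y \<delta> \<and> \<delta> 0 = y \<and> \<delta> 1 = y \<and> (\<forall>t\<in>{0..1}. p (\<delta> t) = \<gamma> t))"

text \<open>The hypothesis of the lifting criterion, imposed at every pair of base points; for a regular
  cover this is the usual condition on fundamental groups.\<close>

definition preserves_closed_lifts :: "'b topology \<Rightarrow> 'a topology \<Rightarrow> ('b \<Rightarrow> 'a) \<Rightarrow> ('a \<Rightarrow> 'a) \<Rightarrow> bool" where
  "preserves_closed_lifts Y X p f \<longleftrightarrow>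
     (\<forall>\<gamma> y y'. pathin X \<gamma> \<and> lifts_to_closed_loop Y p \<gamma> y \<and> y' \<in> topspace Y \<and> p y' = f (\<gamma> 0)
        \<longrightarrow> lifts_to_closed_loop Y p (\<lambda>t. f (\<gamma> t)) y')"

text \<open>Run along \<open>\<delta>1\<close> and back along \<open>\<delta>2\<close>: the \<open>f\<close>-image of this loop lifts to a closed
  loop, whose two halves are \<open>\<epsilon>1\<close> and the reverse of \<open>\<epsilon>2\<close> by uniqueness of lifts.\<close>

lemma preserves_closed_lifts_endpoint:
  assumes cov: "covering_map Y X p" and f: "preserves_closed_lifts Y X p f"
    and \<delta>1: "pathin Y \<delta>1" and \<delta>2: "pathin Y \<delta>2" "\<delta>2 0 = \<delta>1 0" "\<delta>2 1 = \<delta>1 1"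
    and \<epsilon>1: "pathin Y \<epsilon>1" "\<forall>t\<in>{0..1}. p (\<epsilon>1 t) = f (p (\<delta>1 t))"
    and \<epsilon>2: "pathin Y \<epsilon>2" "\<epsilon>2 0 = \<epsilon>1 0" "\<forall>t\<in>{0..1}. p (\<epsilon>2 t) = f (p (\<delta>2 t))"
  shows "\<epsilon>2 1 = \<epsilon>1 1"
proof -
  define \<delta> where "\<delta> = path_join \<delta>1 (\<lambda>t. \<delta>2 (1 - t))"
  have "pathin Y (\<lambda>t. \<delta>2 (1 - t))"
    using \<delta>2(1) by (rule pathin_reparam) (auto intro!: continuous_intros)
  then have "pathin Y \<delta>"
    unfolding \<delta>_def using \<delta>1 \<delta>2(3) by (simp add: pathin_path_join)
  moreover have "\<delta> 0 = \<delta>1 0" "\<delta> 1 = \<delta>1 0"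
    using \<delta>2 by (simp_all add: \<delta>_def)
  ultimately have "lifts_to_closed_loop Y p (\<lambda>t. p (\<delta> t)) (\<delta>1 0)"
    unfolding lifts_to_closed_loop_def by auto
  moreover have "pathin X (\<lambda>t. p (\<delta> t))"
    using pathin_compose[OF \<open>pathin Y \<delta>\<close> covering_map_continuous[OF cov]] by (simp add: o_def)
  moreover have "\<epsilon>1 0 \<in> topspace Y" "p (\<epsilon>1 0) = f (p (\<delta> 0))"
    using path_start_in_topspace[OF \<epsilon>1(1)] \<epsilon>1(2) \<open>\<delta> 0 = \<delta>1 0\<close> by auto
  ultimately have "lifts_to_closed_loop Y p (\<lambda>t. f (p (\<delta> t))) (\<epsilon>1 0)"
    using f[unfolded preserves_closed_lifts_def, rule_format, of "\<lambda>t. p (\<delta> t)" "\<delta>1 0" "\<epsilon>1 0"] by simp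
  then obtain \<epsilon> where \<epsilon>: "pathin Y \<epsilon>" "\<epsilon> 0 = \<epsilon>1 0" "\<epsilon> 1 = \<epsilon>1 0"
    "\<forall>t\<in>{0..1}. p (\<epsilon> t) = f (p (\<delta> t))"
    unfolding lifts_to_closed_loop_def by blast
  have first_half: "\<forall>t\<in>{0..1}. \<epsilon>1 t = \<epsilon> (t / 2)"
  proof (rule covering_map_lift_unique[OF cov \<epsilon>1(1)])
    show "pathin Y (\<lambda>t. \<epsilon> (t / 2))"
      using \<epsilon>(1) by (rule pathin_reparam) (auto intro!: continuous_intros)
    show "\<forall>t\<in>{0..1}. p (\<epsilon>1 t) = p (\<epsilon> (t / 2))"
      using \<epsilon>1(2) \<epsilon>(4) by (simp add: \<delta>_def path_join_def)
  qed (use \<epsilon> in simp)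
  have second_half: "\<forall>t\<in>{0..1}. \<epsilon>2 t = \<epsilon> (1 - t / 2)"
  proof (rule covering_map_lift_unique[OF cov \<epsilon>2(1)])
    show "pathin Y (\<lambda>t. \<epsilon> (1 - t / 2))"
      using \<epsilon>(1) by (rule pathin_reparam) (auto intro!: continuous_intros)
    have "\<delta> (1 - t / 2) = \<delta>2 t" if "t \<in> {0..1}" for t
      using that \<delta>2(3) by (cases "t = 1") (auto simp: \<delta>_def path_join_def)
    then show "\<forall>t\<in>{0..1}. p (\<epsilon>2 t) = p (\<epsilon> (1 - t / 2))"
      using \<epsilon>2(3) \<epsilon>(4) by simp
  qed (use \<epsilon> \<epsilon>2 in simp)
  show ?thesis
    using first_half second_half by simp
qed

lemma covering_map_local_lifts:
  assumes cov: "covering_map Y X p" and lpc: "locally_path_connected_space X" and f: "continuous_map X X f"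
    and y1: "y1 \<in> topspace Y" and e: "e \<in> topspace Y" "p e = f (p y1)"
  obtains N q where "openin Y N" "y1 \<in> N" "continuous_map (subtopology Y N) Y q"
    "\<And>y. y \<in> N \<Longrightarrow> \<exists>\<delta> \<epsilon>. pathin Y \<delta> \<and> \<delta> 0 = y1 \<and> \<delta> 1 = y \<and> pathin Y \<epsilon> \<and> \<epsilon> 0 = e \<and> \<epsilon> 1 = q y
               \<and> (\<forall>t\<in>{0..1}. p (\<epsilon> t) = f (p (\<delta> t)))"
proof -
  have x1: "p y1 \<in> topspace X"
    using covering_map_in_topspace[OF cov y1] .
  obtain U where U: "evenly_covered Y X p U" "p y1 \<in> U"
    using covering_map_evenly_covered[OF cov x1] .
  obtain V s where V: "openin Y V" "y1 \<in> V" "continuous_map (subtopology X U) Y s"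
    "\<And>x. x \<in> U \<Longrightarrow> s x \<in> V \<and> p (s x) = x" "\<And>y. y \<in> V \<Longrightarrow> s (p y) = y"
    by (rule evenly_covered_section[OF U(1) y1 U(2)]) simp
  obtain U' where U': "evenly_covered Y X p U'" "f (p y1) \<in> U'"
    using covering_map_evenly_covered[OF cov covering_map_in_topspace[OF cov e(1)]] unfolding e(2) .
  obtain V' s' where V': "e \<in> V'" "continuous_map (subtopology X U') Y s'"
    "\<And>x. x \<in> U' \<Longrightarrow> s' x \<in> V' \<and> p (s' x) = x" "\<And>y. y \<in> V' \<Longrightarrow> s' (p y) = y"
    by (rule evenly_covered_section[OF U'(1) e(1)]) (use e(2) U'(2) in simp_all)
  have "openin X (U \<inter> {x \<in> topspace X. f x \<in> U'})"
    using U(1) U'(1) openin_continuous_map_preimage[OF f] by (auto simp: evenly_covered_def)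
  then obtain W where W: "openin X W" "path_connectedin X W" "p y1 \<in> W" "W \<subseteq> U \<inter> {x \<in> topspace X. f x \<in> U'}"
    using lpc U(2) U'(2) x1 unfolding locally_path_connected_space by blast
  define N where "N = V \<inter> {y \<in> topspace Y. p y \<in> W}"
  have "openin Y N"
    unfolding N_def using V(1) openin_continuous_map_preimage[OF covering_map_continuous[OF cov] W(1)]
    by (rule openin_Int)
  moreover have "y1 \<in> N"
    using V(2) y1 W(3) by (simp add: N_def)
  moreover have "continuous_map (subtopology Y N) Y (\<lambda>y. s' (f (p y)))"
  proof -
    have "continuous_map (subtopology Y N) X (\<lambda>y. f (p y))"
      using continuous_map_compose[OF covering_map_continuous[OF cov] f]
      by (simp add: continuous_map_from_subtopology o_def)
    then have "continuous_map (subtopology Y N) (subtopology X U') (\<lambda>y. f (p y))"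
      using W(4) by (auto simp: continuous_map_in_subtopology N_def)
    then show ?thesis
      using continuous_map_compose[OF _ V'(2)] by (simp add: o_def)
  qed
  moreover have "\<exists>\<delta> \<epsilon>. pathin Y \<delta> \<and> \<delta> 0 = y1 \<and> \<delta> 1 = y \<and> pathin Y \<epsilon> \<and> \<epsilon> 0 = e \<and> \<epsilon> 1 = s' (f (p y))
               \<and> (\<forall>t\<in>{0..1}. p (\<epsilon> t) = f (p (\<delta> t)))" if y: "y \<in> N" for y
  proof -
    obtain \<sigma> where \<sigma>: "pathin X \<sigma>" "\<sigma> \<in> {0..1} \<rightarrow> W" "\<sigma> 0 = p y1" "\<sigma> 1 = p y"
      using W(2,3) y unfolding path_connectedin N_def by blast
    have "pathin (subtopology X U) \<sigma>" "pathin (subtopology X U') (\<lambda>t. f (\<sigma> t))"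
      using \<sigma>(1,2) W(4) pathin_compose[OF \<sigma>(1) f] by (auto simp: pathin_subtopology o_def)
    then have "pathin Y (\<lambda>t. s (\<sigma> t))" "pathin Y (\<lambda>t. s' (f (\<sigma> t)))"
      using pathin_compose[OF _ V(3)] pathin_compose[OF _ V'(2)] by (auto simp: o_def)
    moreover have "s (\<sigma> 0) = y1" "s (\<sigma> 1) = y" "s' (f (\<sigma> 0)) = e"
      using V(2,5) V'(4)[OF V'(1)] e(2) y \<sigma>(3,4) by (auto simp: N_def)
    moreover have "p (s' (f (\<sigma> t))) = f (p (s (\<sigma> t)))" if "t \<in> {0..1}" for t
    proof -
      have "\<sigma> t \<in> U" "f (\<sigma> t) \<in> U'"
        using \<sigma>(2) W(4) that by auto
      then show ?thesis
        using V(4) V'(3) by simp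
    qed
    ultimately show ?thesis
      using \<sigma>(4) by (intro exI[of _ "\<lambda>t. s (\<sigma> t)"] exI[of _ "\<lambda>t. s' (f (\<sigma> t))"]) simp
  qed
  ultimately show thesis
    using that by blast
qed

lemma covering_map_lifted_map_continuous:
  assumes cov: "covering_map Y X p" and pcY: "path_connected_space Y"
    and lpc: "locally_path_connected_space X" and f: "continuous_map X X f"
    and y0: "y0 \<in> topspace Y" and y0': "y0' \<in> topspace Y" "p y0' = f (p y0)"
    and endpoint: "\<And>\<delta> \<epsilon>. \<lbrakk>pathin Y \<delta>; \<delta> 0 = y0; pathin Y \<epsilon>; \<epsilon> 0 = y0';
                            \<forall>t\<in>{0..1}. p (\<epsilon> t) = f (p (\<delta> t))\<rbrakk> \<Longrightarrow> h (\<delta> 1) = \<epsilon> 1"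
  shows "continuous_map Y Y h"
proof (rule continuous_map_locally)
  fix y1 assume y1: "y1 \<in> topspace Y"
  obtain \<delta>1 where \<delta>1: "pathin Y \<delta>1" "\<delta>1 0 = y0" "\<delta>1 1 = y1"
    using pcY y0 y1 unfolding path_connected_space_def by blast
  obtain \<epsilon>1 where \<epsilon>1: "pathin Y \<epsilon>1" "\<epsilon>1 0 = y0'" "\<forall>t\<in>{0..1}. p (\<epsilon>1 t) = f (p (\<delta>1 t))"
    using covering_map_lift_mapped_path[OF cov f \<delta>1(1) y0'(1)] y0'(2) \<delta>1(2) by auto
  have e: "\<epsilon>1 1 \<in> topspace Y" "p (\<epsilon>1 1) = f (p y1)"
    using path_finish_in_topspace[OF \<epsilon>1(1)] \<epsilon>1(3) \<delta>1(3) by auto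
  obtain N q where N: "openin Y N" "y1 \<in> N" "continuous_map (subtopology Y N) Y q"
    and paths: "\<And>y. y \<in> N \<Longrightarrow> \<exists>\<delta> \<epsilon>. pathin Y \<delta> \<and> \<delta> 0 = y1 \<and> \<delta> 1 = y \<and> pathin Y \<epsilon> \<and> \<epsilon> 0 = \<epsilon>1 1
               \<and> \<epsilon> 1 = q y \<and> (\<forall>t\<in>{0..1}. p (\<epsilon> t) = f (p (\<delta> t)))"
    using covering_map_local_lifts[OF cov lpc f y1 e] by metis
  have "h y = q y" if y: "y \<in> N" for y
  proof -
    obtain \<delta> \<epsilon> where \<delta>: "pathin Y \<delta>" "\<delta> 0 = y1" "\<delta> 1 = y" and \<epsilon>: "pathin Y \<epsilon>" "\<epsilon> 0 = \<epsilon>1 1" "\<epsilon> 1 = q y"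
      and lift: "\<forall>t\<in>{0..1}. p (\<epsilon> t) = f (p (\<delta> t))"
      using paths[OF y] by blast
    have "h (path_join \<delta>1 \<delta> 1) = path_join \<epsilon>1 \<epsilon> 1"
      using \<delta>1 \<delta> \<epsilon>1 \<epsilon> lift
      by (intro endpoint pathin_path_join path_join_related) simp_all
    then show ?thesis
      using \<delta>(3) \<epsilon>(3) by simp
  qed
  then show "\<exists>N. openin Y N \<and> y1 \<in> N \<and> continuous_map (subtopology Y N) Y h"
    using N continuous_map_eq[of "subtopology Y N" Y q h] by auto
qed

lemma covering_map_lift_map:
  assumes cov: "covering_map Y X p" and pcY: "path_connected_space Y"
    and lpc: "locally_path_connected_space X" and f: "continuous_map X X f"
    and pres: "preserves_closed_lifts Y X p f"
    and y0: "y0 \<in> topspace Y" and y0': "y0' \<in> topspace Y" "p y0' = f (p y0)"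
  obtains h where "continuous_map Y Y h" "\<And>y. y \<in> topspace Y \<Longrightarrow> p (h y) = f (p y)" "h y0 = y0'"
proof -
  define lifted where "lifted y z \<longleftrightarrow> (\<exists>\<delta> \<epsilon>. pathin Y \<delta> \<and> \<delta> 0 = y0 \<and> \<delta> 1 = y \<and> pathin Y \<epsilon> \<and> \<epsilon> 0 = y0'
      \<and> (\<forall>t\<in>{0..1}. p (\<epsilon> t) = f (p (\<delta> t))) \<and> z = \<epsilon> 1)" for y z
  define h where "h y = (SOME z. lifted y z)" for y
  have endpoint: "h (\<delta> 1) = \<epsilon> 1"
    if \<delta>: "pathin Y \<delta>" "\<delta> 0 = y0" and \<epsilon>: "pathin Y \<epsilon>" "\<epsilon> 0 = y0'" "\<forall>t\<in>{0..1}. p (\<epsilon> t) = f (p (\<delta> t))"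
    for \<delta> \<epsilon>
  proof -
    have "lifted (\<delta> 1) (\<epsilon> 1)"
      unfolding lifted_def using \<delta> \<epsilon> by blast
    then have "lifted (\<delta> 1) (h (\<delta> 1))"
      unfolding h_def by (rule someI)
    then obtain \<delta>' \<epsilon>' where "pathin Y \<delta>'" "\<delta>' 0 = y0" "\<delta>' 1 = \<delta> 1" "pathin Y \<epsilon>'" "\<epsilon>' 0 = y0'"
      "\<forall>t\<in>{0..1}. p (\<epsilon>' t) = f (p (\<delta>' t))" "h (\<delta> 1) = \<epsilon>' 1"
      unfolding lifted_def by blast
    then show ?thesis
      using preserves_closed_lifts_endpoint[OF cov pres \<delta>(1), of \<delta>' \<epsilon> \<epsilon>'] \<delta> \<epsilon> by simp
  qed
  have h_lifts: "p (h y) = f (p y)" if y: "y \<in> topspace Y" for y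
  proof -
    obtain \<delta> where \<delta>: "pathin Y \<delta>" "\<delta> 0 = y0" "\<delta> 1 = y"
      using pcY y0 y unfolding path_connected_space_def by blast
    obtain \<epsilon> where \<epsilon>: "pathin Y \<epsilon>" "\<epsilon> 0 = y0'" "\<forall>t\<in>{0..1}. p (\<epsilon> t) = f (p (\<delta> t))"
      using covering_map_lift_mapped_path[OF cov f \<delta>(1) y0'(1)] y0'(2) \<delta>(2) by auto
    show ?thesis
      using endpoint[OF \<delta>(1,2) \<epsilon>] \<epsilon>(3) \<delta>(3) by auto
  qed
  have "h y0 = y0'"
    using endpoint[of "\<lambda>t. y0" "\<lambda>t. y0'"] y0 y0' by simp
  moreover have "continuous_map Y Y h"
    by (rule covering_map_lifted_map_continuous[OF cov pcY lpc f y0 y0']) (rule endpoint)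
  ultimately show thesis
    using that h_lifts by simp
qed

lemma covering_map_lift_eq_id:
  assumes cov: "covering_map Y X p" and pcY: "path_connected_space Y"
    and k: "continuous_map Y Y k" "\<And>y. y \<in> topspace Y \<Longrightarrow> p (k y) = p y"
    and y0: "y0 \<in> topspace Y" and fixed: "k y0 = y0" and y: "y \<in> topspace Y"
  shows "k y = y"
proof -
  obtain \<delta> where \<delta>: "pathin Y \<delta>" "\<delta> 0 = y0" "\<delta> 1 = y"
    using pcY y0 y unfolding path_connected_space_def by blast
  have k\<delta>: "pathin Y (\<lambda>t. k (\<delta> t))"
    using pathin_compose[OF \<delta>(1) k(1)] by (simp add: o_def)
  moreover have "\<forall>t\<in>{0..1}. p (k (\<delta> t)) = p (\<delta> t)"
    using k(2) path_image_subset_topspace[OF \<delta>(1)] by auto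
  ultimately have "\<forall>t\<in>{0..1}. k (\<delta> t) = \<delta> t"
    using covering_map_lift_unique[OF cov k\<delta> \<delta>(1)] \<delta>(2) fixed by simp
  then show ?thesis
    using \<delta>(3) by auto
qed

text \<open>Lift \<open>f\<close> and its inverse with matching base points; both composites of the lifts cover the
  identity and fix a point, so they are the identity.\<close>

lemma covering_map_lifts_to_homeo:
  assumes cov: "covering_map Y X p" and pcY: "path_connected_space Y"
    and lpc: "locally_path_connected_space X" and ne: "topspace Y \<noteq> {}"
    and fg: "homeomorphic_maps X X f g"
    and pres: "preserves_closed_lifts Y X p f" "preserves_closed_lifts Y X p g"
  shows "lifts_to_homeo Y X p f"
proof -
  have f: "continuous_map X X f" and g: "continuous_map X X g"
    and gf: "\<And>x. x \<in> topspace X \<Longrightarrow> g (f x) = x" and fg': "\<And>x. x \<in> topspace X \<Longrightarrow> f (g x) = x"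
    using fg by (auto simp: homeomorphic_maps_def)
  obtain y0 where y0: "y0 \<in> topspace Y"
    using ne by blast
  have "p ` topspace Y = topspace X"
    using cov by (simp add: covering_map_def)
  then have "f (p y0) \<in> p ` topspace Y"
    using f covering_map_in_topspace[OF cov y0] continuous_map_image_subset_topspace by blast
  then obtain y1 where y1: "y1 \<in> topspace Y" "p y1 = f (p y0)"
    by auto
  obtain h where h: "continuous_map Y Y h" "\<And>y. y \<in> topspace Y \<Longrightarrow> p (h y) = f (p y)" "h y0 = y1"
    by (rule covering_map_lift_map[OF cov pcY lpc f pres(1) y0 y1]) simp
  have "p y0 = g (p y1)"
    using y1(2) gf covering_map_in_topspace[OF cov y0] by simp
  then obtain h' where h': "continuous_map Y Y h'" "\<And>y. y \<in> topspace Y \<Longrightarrow> p (h' y) = g (p y)" "h' y1 = y0"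
    by (rule covering_map_lift_map[OF cov pcY lpc g pres(2) y1(1) y0]) simp
  have in_Y: "h y \<in> topspace Y" "h' y \<in> topspace Y" if "y \<in> topspace Y" for y
    using h(1) h'(1) that continuous_map_image_subset_topspace by blast+
  have "h' (h y) = y" if "y \<in> topspace Y" for y
  proof (rule covering_map_lift_eq_id[OF cov pcY _ _ y0 _ that])
    show "continuous_map Y Y (\<lambda>y. h' (h y))"
      using continuous_map_compose[OF h(1) h'(1)] by (simp add: o_def)
  qed (use h h' in_Y gf covering_map_in_topspace[OF cov] in simp_all)
  moreover have "h (h' y) = y" if "y \<in> topspace Y" for y
  proof (rule covering_map_lift_eq_id[OF cov pcY _ _ y1(1) _ that])
    show "continuous_map Y Y (\<lambda>y. h (h' y))"
      using continuous_map_compose[OF h'(1) h(1)] by (simp add: o_def)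
  qed (use h h' in_Y fg' covering_map_in_topspace[OF cov] in simp_all)
  ultimately have "homeomorphic_maps Y Y h h'"
    unfolding homeomorphic_maps_def using h(1) h'(1) by blast
  then have "homeomorphic_map Y Y h"
    using homeomorphic_map_maps by blast
  then show ?thesis
    unfolding lifts_to_homeo_def using h(2) by blast
qed

section \<open>Homology classes of loops\<close>

lemma singular_simplex_loop_simplex:
  assumes "pathin X \<gamma>"
  shows "singular_simplex 1 X (loop_simplex \<gamma>)"
  unfolding singular_simplex_def loop_simplex_def
proof
  let ?S = "subtopology (powertop_real UNIV) (standard_simplex 1)"
  have "continuous_map ?S (top_of_set {0..1}) (\<lambda>x. x 1)"
  proof (rule continuous_map_into_subtopology)
    show "continuous_map ?S euclideanreal (\<lambda>x. x 1)"
      by (rule continuous_map_from_subtopology) (rule continuous_map_product_projection, simp)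
    show "(\<lambda>x. x 1) \<in> topspace ?S \<rightarrow> {0..1}"
      by (auto simp: standard_simplex_def)
  qed
  then have "continuous_map ?S X (\<lambda>x. \<gamma> (x 1))"
    using continuous_map_compose assms unfolding pathin_def o_def by fastforce
  then show "continuous_map ?S X (restrict (\<lambda>x. \<gamma> (x 1)) (standard_simplex 1))"
    by (rule continuous_map_eq) simp
qed simp

lemma singular_relcycle_loop_simplex:
  assumes "pathin X \<gamma>" "\<gamma> 0 = \<gamma> 1"
  shows "singular_relcycle 1 X {} (frag_of (loop_simplex \<gamma>))"
  unfolding singular_cycle
proof
  show "singular_chain 1 X (frag_of (loop_simplex \<gamma>))"
    using singular_simplex_loop_simplex[OF assms(1)] by (simp add: singular_chain_of)
  have "singular_face 1 0 (loop_simplex \<gamma>) = singular_face 1 1 (loop_simplex \<gamma>)"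
  proof (rule ext)
    fix x
    show "singular_face 1 0 (loop_simplex \<gamma>) x = singular_face 1 1 (loop_simplex \<gamma>) x"
    proof (cases "x \<in> standard_simplex 0")
      case True
      then have "simplical_face 0 x \<in> standard_simplex 1" "simplical_face 1 x \<in> standard_simplex 1"
        using simplical_face_in_standard_simplex[of 1 _ x] by simp_all
      moreover have "simplical_face 0 x 1 = 1" "simplical_face 1 x 1 = 0"
        using True by (simp_all add: simplical_face_def standard_simplex_def)
      ultimately show ?thesis
        using True assms(2) by (simp add: singular_face_def loop_simplex_def)
    qed (simp add: singular_face_def)
  qed
  then show "chain_boundary 1 (frag_of (loop_simplex \<gamma>)) = 0"
    by (simp add: chain_boundary_of)
qed

lemma loop_class_in_carrier:
  assumes "pathin X \<gamma>" "\<gamma> 0 = \<gamma> 1"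
  shows "loop_class X \<gamma> \<in> carrier (homology_group 1 X)"
  using carrier_relative_homology_group[of 1 X "{}"] singular_relcycle_loop_simplex[OF assms]
  unfolding loop_class_def by simp

lemma hom_induced_loop_class:
  assumes "pathin X \<gamma>" "\<gamma> 0 = \<gamma> 1" and f: "continuous_map X X' f"
  shows "hom_induced 1 X {} X' {} f (loop_class X \<gamma>) = loop_class X' (\<lambda>t. f (\<gamma> t))"
proof -
  have "simplex_map 1 f (loop_simplex \<gamma>) = loop_simplex (\<lambda>t. f (\<gamma> t))"
    by (rule ext) (simp add: simplex_map_def loop_simplex_def)
  then show ?thesis
    using hom_induced_chain_map[OF f _ singular_relcycle_loop_simplex[OF assms(1,2)]]
    by (simp add: loop_class_def)
qed

definition loop_classes_in_homology :: "'a topology \<Rightarrow> nat \<Rightarrow> (nat \<Rightarrow> real \<Rightarrow> 'a) \<Rightarrow> (nat \<Rightarrow> real \<Rightarrow> 'a) \<Rightarrow> bool" where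
  "loop_classes_in_homology X g a b \<longleftrightarrow>
     (\<forall>i\<in>{1..g}. loop_class X (a i) \<in> carrier (homology_group 1 X) \<and> loop_class X (b i) \<in> carrier (homology_group 1 X))"

lemma hcomb_cong:
  assumes "loop_classes_in_homology X g a b" "\<And>i. i \<in> {1..g} \<Longrightarrow> n i = n' i \<and> m i = m' i"
  shows "hcomb X g a b n m = hcomb X g a b n' m'"
proof -
  interpret H: comm_group "homology_group 1 X"
    by (rule abelian_homology_group)
  show ?thesis
    using assms unfolding hcomb_def loop_classes_in_homology_def by (intro H.finprod_cong) auto
qed

lemma hcomb_zero:
  assumes "loop_classes_in_homology X g a b"
  shows "hcomb X g a b (\<lambda>i. 0) (\<lambda>i. 0) = \<one>\<^bsub>homology_group 1 X\<^esub>"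
proof -
  interpret H: comm_group "homology_group 1 X"
    by (rule abelian_homology_group)
  show ?thesis
    using assms unfolding hcomb_def loop_classes_in_homology_def by (intro H.finprod_one_eqI) auto
qed

lemma hcomb_mult:
  assumes "loop_classes_in_homology X g a b"
  shows "hcomb X g a b n m \<otimes>\<^bsub>homology_group 1 X\<^esub> hcomb X g a b n' m'
       = hcomb X g a b (\<lambda>i. n i + n' i) (\<lambda>i. m i + m' i)"
proof -
  let ?H = "homology_group 1 X"
  interpret H: comm_group ?H
    by (rule abelian_homology_group)
  let ?A = "\<lambda>i. loop_class X (a i)" and ?B = "\<lambda>i. loop_class X (b i)"
  have AB: "?A i \<in> carrier ?H" "?B i \<in> carrier ?H" if "i \<in> {1..g}" for i
    using assms that unfolding loop_classes_in_homology_def by auto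
  have "hcomb X g a b n m \<otimes>\<^bsub>?H\<^esub> hcomb X g a b n' m' =
     finprod ?H (\<lambda>i. (?A i [^]\<^bsub>?H\<^esub> n i \<otimes>\<^bsub>?H\<^esub> ?B i [^]\<^bsub>?H\<^esub> m i)
       \<otimes>\<^bsub>?H\<^esub> (?A i [^]\<^bsub>?H\<^esub> n' i \<otimes>\<^bsub>?H\<^esub> ?B i [^]\<^bsub>?H\<^esub> m' i)) {1..g}"
    unfolding hcomb_def by (rule H.finprod_multf[symmetric]) (auto simp: AB)
  also have "\<dots> = hcomb X g a b (\<lambda>i. n i + n' i) (\<lambda>i. m i + m' i)"
    unfolding hcomb_def
  proof (rule H.finprod_cong')
    fix i assume "i \<in> {1..g}"
    then show "(?A i [^]\<^bsub>?H\<^esub> n i \<otimes>\<^bsub>?H\<^esub> ?B i [^]\<^bsub>?H\<^esub> m i)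
       \<otimes>\<^bsub>?H\<^esub> (?A i [^]\<^bsub>?H\<^esub> n' i \<otimes>\<^bsub>?H\<^esub> ?B i [^]\<^bsub>?H\<^esub> m' i)
       = ?A i [^]\<^bsub>?H\<^esub> (n i + n' i) \<otimes>\<^bsub>?H\<^esub> ?B i [^]\<^bsub>?H\<^esub> (m i + m' i)"
      using AB by (simp add: H.int_pow_mult H.m_ac)
  qed (use AB in auto)
  finally show ?thesis .
qed

lemma hcomb_pow:
  assumes "loop_classes_in_homology X g a b"
  shows "hcomb X g a b n m [^]\<^bsub>homology_group 1 X\<^esub> (k::nat)
       = hcomb X g a b (\<lambda>i. int k * n i) (\<lambda>i. int k * m i)"
proof (induction k)
  case 0
  then show ?case
    using hcomb_zero[OF assms] by simp
next
  case (Suc k)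
  then show ?case
    by (simp add: hcomb_mult[OF assms] algebra_simps)
qed

lemma in_ker_phi_mult_pow:
  assumes loops: "loop_classes_in_homology X g a b" and "g \<ge> 1" and basis: "homology_basis X g a b"
    and c: "in_ker_phi X g a b k c" and d: "d \<in> carrier (homology_group 1 X)"
  shows "in_ker_phi X g a b k (c \<otimes>\<^bsub>homology_group 1 X\<^esub> d [^]\<^bsub>homology_group 1 X\<^esub> k)"
proof -
  obtain n m where nm: "c = hcomb X g a b n m" "int k dvd m 1"
    using c unfolding in_ker_phi_def by blast
  have "\<exists>nm. d = hcomb X g a b (fst nm) (snd nm)"
    using basis d unfolding homology_basis_def by (meson ex1_implies_ex)
  then obtain n' m' where d': "d = hcomb X g a b n' m'"
    by auto
  define N where "N = restrict (\<lambda>i. n i + int k * n' i) {1..g}"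
  define M where "M = restrict (\<lambda>i. m i + int k * m' i) {1..g}"
  have eq: "c \<otimes>\<^bsub>homology_group 1 X\<^esub> d [^]\<^bsub>homology_group 1 X\<^esub> k = hcomb X g a b N M"
    unfolding nm(1) d' hcomb_pow[OF loops] hcomb_mult[OF loops] N_def M_def
    by (rule hcomb_cong[OF loops]) simp
  have "int k dvd M 1"
    using nm(2) \<open>g \<ge> 1\<close> by (simp add: M_def)
  then show ?thesis
    unfolding in_ker_phi_def eq by (intro exI[of _ N] exI[of _ M]) (simp add: N_def M_def)
qed

section \<open>Acting trivially on homology modulo \<open>k\<close>\<close>

lemma hom_induced_compose_topspace:
  assumes "continuous_map X X f" "continuous_map X X g"
  shows "hom_induced p X {} X {} (compose (topspace X) f g) c
       = hom_induced p X {} X {} f (hom_induced p X {} X {} g c)"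
proof -
  have "hom_induced p X {} X {} (compose (topspace X) f g) = hom_induced p X {} X {} (f \<circ> g)"
    by (rule hom_induced_eq) (simp add: compose_def)
  then show ?thesis
    using hom_induced_compose'[OF assms(2) _ assms(1)] by simp
qed

lemma hom_induced_inverse:
  assumes "homeomorphic_maps X X f h" "c \<in> carrier (homology_group p X)"
  shows "hom_induced p X {} X {} f (hom_induced p X {} X {} h c) = c"
proof -
  have f: "continuous_map X X f" and h: "continuous_map X X h" and fh: "\<And>x. x \<in> topspace X \<Longrightarrow> f (h x) = x"
    using assms(1) by (auto simp: homeomorphic_maps_def)
  have "hom_induced p X {} X {} f (hom_induced p X {} X {} h c) = hom_induced p X {} X {} (f \<circ> h) c"
    by (rule hom_induced_compose'[OF h _ f]) auto
  also have "\<dots> = c"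
    using continuous_map_compose[OF h f] fh assms(2) by (intro hom_induced_id_gen) auto
  finally show ?thesis .
qed

lemma hom_induced_mult_pow:
  assumes "c \<in> carrier (homology_group 1 X)" "d \<in> carrier (homology_group 1 X)"
  shows "hom_induced 1 X {} X' {} f (c \<otimes>\<^bsub>homology_group 1 X\<^esub> d [^]\<^bsub>homology_group 1 X\<^esub> (k::nat))
     = hom_induced 1 X {} X' {} f c \<otimes>\<^bsub>homology_group 1 X'\<^esub> (hom_induced 1 X {} X' {} f d) [^]\<^bsub>homology_group 1 X'\<^esub> k"
proof -
  interpret f: group_hom "homology_group 1 X" "homology_group 1 X'" "hom_induced 1 X {} X' {} f"
    by (simp add: group_hom_def group_hom_axioms_def hom_induced_empty_hom)
  show ?thesis
    using assms by (simp add: f.hom_nat_pow)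
qed

lemma acts_trivially_mod_restrict:
  "acts_trivially_mod X k (restrict f (topspace X)) \<longleftrightarrow> acts_trivially_mod X k f"
proof -
  have "hom_induced 1 X {} X {} (restrict f (topspace X)) = hom_induced 1 X {} X {} f"
    by (rule hom_induced_eq) simp
  then show ?thesis
    by (simp add: acts_trivially_mod_def)
qed

lemma acts_trivially_mod_id: "acts_trivially_mod X k (restrict id (topspace X))"
  unfolding acts_trivially_mod_restrict
  unfolding acts_trivially_mod_def
proof
  fix c assume c: "c \<in> carrier (homology_group 1 X)"
  interpret H: comm_group "homology_group 1 X"
    by (rule abelian_homology_group)
  have "hom_induced 1 X {} X {} id c = c"
    using c by (simp add: hom_induced_id)
  then show "\<exists>d\<in>carrier (homology_group 1 X). hom_induced 1 X {} X {} id c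
      = c \<otimes>\<^bsub>homology_group 1 X\<^esub> d [^]\<^bsub>homology_group 1 X\<^esub> k"
    using c by (intro bexI[of _ "\<one>\<^bsub>homology_group 1 X\<^esub>"]) auto
qed

lemma acts_trivially_mod_compose:
  assumes f: "acts_trivially_mod X k f" "continuous_map X X f"
    and g: "acts_trivially_mod X k g" "continuous_map X X g"
  shows "acts_trivially_mod X k (compose (topspace X) f g)"
  unfolding acts_trivially_mod_def
proof
  let ?H = "homology_group 1 X"
  interpret H: comm_group ?H
    by (rule abelian_homology_group)
  fix c assume c: "c \<in> carrier ?H"
  obtain d where d: "d \<in> carrier ?H" "hom_induced 1 X {} X {} g c = c \<otimes>\<^bsub>?H\<^esub> d [^]\<^bsub>?H\<^esub> k"
    using g(1) c unfolding acts_trivially_mod_def by blast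
  obtain e where e: "e \<in> carrier ?H" "hom_induced 1 X {} X {} f c = c \<otimes>\<^bsub>?H\<^esub> e [^]\<^bsub>?H\<^esub> k"
    using f(1) c unfolding acts_trivially_mod_def by blast
  let ?fd = "hom_induced 1 X {} X {} f d"
  have fd: "?fd \<in> carrier ?H"
    by (rule hom_induced_carrier)
  have "hom_induced 1 X {} X {} (compose (topspace X) f g) c
      = c \<otimes>\<^bsub>?H\<^esub> e [^]\<^bsub>?H\<^esub> k \<otimes>\<^bsub>?H\<^esub> ?fd [^]\<^bsub>?H\<^esub> k"
    by (simp add: hom_induced_compose_topspace[OF f(2) g(2)] d(2) hom_induced_mult_pow[OF c d(1)] e(2))
  also have "\<dots> = c \<otimes>\<^bsub>?H\<^esub> (e \<otimes>\<^bsub>?H\<^esub> ?fd) [^]\<^bsub>?H\<^esub> k"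
    using c e(1) fd by (simp add: H.nat_pow_distrib H.m_assoc)
  finally show "\<exists>d\<in>carrier ?H. hom_induced 1 X {} X {} (compose (topspace X) f g) c = c \<otimes>\<^bsub>?H\<^esub> d [^]\<^bsub>?H\<^esub> k"
    using e(1) fd by blast
qed

lemma acts_trivially_mod_inverse:
  assumes acts: "acts_trivially_mod X k f" and fh: "homeomorphic_maps X X f h"
  shows "acts_trivially_mod X k h"
  unfolding acts_trivially_mod_def
proof
  let ?H = "homology_group 1 X"
  interpret H: comm_group ?H
    by (rule abelian_homology_group)
  fix c assume c: "c \<in> carrier ?H"
  have hc: "hom_induced 1 X {} X {} h c \<in> carrier ?H"
    by (rule hom_induced_carrier)
  obtain d where d: "d \<in> carrier ?H"
    "hom_induced 1 X {} X {} f (hom_induced 1 X {} X {} h c) = hom_induced 1 X {} X {} h c \<otimes>\<^bsub>?H\<^esub> d [^]\<^bsub>?H\<^esub> k"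
    using acts hc unfolding acts_trivially_mod_def by blast
  then have "c = hom_induced 1 X {} X {} h c \<otimes>\<^bsub>?H\<^esub> d [^]\<^bsub>?H\<^esub> k"
    using hom_induced_inverse[OF fh c] by simp
  then have "hom_induced 1 X {} X {} h c = c \<otimes>\<^bsub>?H\<^esub> inv\<^bsub>?H\<^esub> (d [^]\<^bsub>?H\<^esub> k)"
    using H.inv_solve_right[OF hc c] d(1) by simp
  then show "\<exists>d\<in>carrier ?H. hom_induced 1 X {} X {} h c = c \<otimes>\<^bsub>?H\<^esub> d [^]\<^bsub>?H\<^esub> k"
    using d(1) by (metis H.inv_closed H.nat_pow_inv)
qed

lemma acts_trivially_mod_conjugate:
  assumes acts: "acts_trivially_mod X k f" and f: "continuous_map X X f" and uv: "homeomorphic_maps X X u v"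
  shows "acts_trivially_mod X k (compose (topspace X) (compose (topspace X) u f) v)"
  unfolding acts_trivially_mod_def
proof
  let ?H = "homology_group 1 X"
  fix c assume c: "c \<in> carrier ?H"
  have u: "continuous_map X X u" and v: "continuous_map X X v"
    using uv by (auto simp: homeomorphic_maps_def)
  have uf: "continuous_map X X (compose (topspace X) u f)"
    by (rule continuous_map_eq[OF continuous_map_compose[OF f u]]) (simp add: compose_def)
  have vc: "hom_induced 1 X {} X {} v c \<in> carrier ?H"
    by (rule hom_induced_carrier)
  obtain d where d: "d \<in> carrier ?H"
    "hom_induced 1 X {} X {} f (hom_induced 1 X {} X {} v c) = hom_induced 1 X {} X {} v c \<otimes>\<^bsub>?H\<^esub> d [^]\<^bsub>?H\<^esub> k"
    using acts vc unfolding acts_trivially_mod_def by blast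
  have "hom_induced 1 X {} X {} (compose (topspace X) (compose (topspace X) u f) v) c
      = c \<otimes>\<^bsub>?H\<^esub> (hom_induced 1 X {} X {} u d) [^]\<^bsub>?H\<^esub> k"
    by (simp add: hom_induced_compose_topspace[OF uf v] hom_induced_compose_topspace[OF u f] d(2)
        hom_induced_mult_pow[OF vc d(1)] hom_induced_inverse[OF uv c])
  then show "\<exists>d\<in>carrier ?H. hom_induced 1 X {} X {} (compose (topspace X) (compose (topspace X) u f) v) c
      = c \<otimes>\<^bsub>?H\<^esub> d [^]\<^bsub>?H\<^esub> k"
    using hom_induced_carrier by blast
qed

lemma in_ker_phi_hom_induced:
  assumes "loop_classes_in_homology X g a b" "g \<ge> 1" "homology_basis X g a b"
    and acts: "acts_trivially_mod X k f"
    and c: "c \<in> carrier (homology_group 1 X)" "in_ker_phi X g a b k c"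
  shows "in_ker_phi X g a b k (hom_induced 1 X {} X {} f c)"
proof -
  obtain d where "d \<in> carrier (homology_group 1 X)"
     "hom_induced 1 X {} X {} f c = c \<otimes>\<^bsub>homology_group 1 X\<^esub> d [^]\<^bsub>homology_group 1 X\<^esub> k"
    using acts c(1) unfolding acts_trivially_mod_def by blast
  then show ?thesis
    using in_ker_phi_mult_pow[OF assms(1-3) c(2)] by simp
qed

section \<open>Level-\<open>k\<close> mapping classes lift\<close>

lemma preserves_closed_lifts_if_in_ker_phi:
  assumes cover: "cover_of_ker_phi Y X p g a b k" and f: "continuous_map X X f"
    and ker: "\<And>c. \<lbrakk>c \<in> carrier (homology_group 1 X); in_ker_phi X g a b k c\<rbrakk>
                   \<Longrightarrow> in_ker_phi X g a b k (hom_induced 1 X {} X {} f c)"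
  shows "preserves_closed_lifts Y X p f"
  unfolding preserves_closed_lifts_def
proof (intro allI impI, elim conjE)
  fix \<gamma> y y' assume \<gamma>: "pathin X \<gamma>" and closed: "lifts_to_closed_loop Y p \<gamma> y"
    and y': "y' \<in> topspace Y" "p y' = f (\<gamma> 0)"
  have criterion: "lifts_to_closed_loop Y p \<gamma> y \<longleftrightarrow> in_ker_phi X g a b k (loop_class X \<gamma>)"
    if "pathin X \<gamma>" "\<gamma> 0 = \<gamma> 1" "y \<in> topspace Y" "p y = \<gamma> 0" for \<gamma> y
    using cover that unfolding cover_of_ker_phi_def lifts_to_closed_loop_def by blast
  obtain \<delta> where \<delta>: "pathin Y \<delta>" "\<delta> 0 = y" "\<delta> 1 = y" "\<forall>t\<in>{0..1}. p (\<delta> t) = \<gamma> t"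
    using closed unfolding lifts_to_closed_loop_def by blast
  have loop: "\<gamma> 0 = \<gamma> 1" and y: "y \<in> topspace Y" "p y = \<gamma> 0"
    using \<delta> path_start_in_topspace[OF \<delta>(1)] by (metis atLeastAtMost_iff order_refl zero_le_one)+
  have f\<gamma>: "pathin X (\<lambda>t. f (\<gamma> t))"
    using pathin_compose[OF \<gamma> f] by (simp add: o_def)
  have "in_ker_phi X g a b k (loop_class X \<gamma>)"
    using criterion[OF \<gamma> loop y] closed by blast
  then have "in_ker_phi X g a b k (loop_class X (\<lambda>t. f (\<gamma> t)))"
    using ker[OF loop_class_in_carrier[OF \<gamma> loop]] hom_induced_loop_class[OF \<gamma> loop f] by simp
  then show "lifts_to_closed_loop Y p (\<lambda>t. f (\<gamma> t)) y'"
    using criterion[OF f\<gamma> _ y'(1)] loop y'(2) by simp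
qed

lemma acts_trivially_mod_lifts_to_homeo:
  assumes cover: "cover_of_ker_phi Y X p g a b k" and surface: "closed_surface X"
    and ker: "loop_classes_in_homology X g a b" "g \<ge> 1" "homology_basis X g a b"
    and fh: "homeomorphic_maps X X f h" and acts: "acts_trivially_mod X k f"
  shows "lifts_to_homeo Y X p f"
proof (rule covering_map_lifts_to_homeo[OF _ _ _ _ fh])
  show cov: "covering_map Y X p"
    using cover by (simp add: cover_of_ker_phi_def)
  show lpc: "locally_path_connected_space X"
    using surface by (rule closed_surface_locally_path_connected)
  have "connected_space Y"
    using cover by (simp add: cover_of_ker_phi_def)
  then show "path_connected_space Y"
    using path_connected_eq_connected_space[OF covering_map_locally_path_connected[OF cov lpc]] by simp
  have "p ` topspace Y = topspace X" "topspace X \<noteq> {}"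
    using cov surface by (simp_all add: covering_map_def closed_surface_def)
  then show "topspace Y \<noteq> {}"
    by (metis image_empty)
  have "continuous_map X X f" "continuous_map X X h"
    using fh by (simp_all add: homeomorphic_maps_def)
  then show "preserves_closed_lifts Y X p f" "preserves_closed_lifts Y X p h"
    using in_ker_phi_hom_induced[OF ker] acts acts_trivially_mod_inverse[OF acts fh]
    by (simp_all add: preserves_closed_lifts_if_in_ker_phi[OF cover])
qed

section \<open>The mapping class group\<close>

lemma continuous_map_fst_unit_interval:
  "continuous_map (prod_topology (top_of_set {0..1::real}) X) euclideanreal fst"
  using continuous_map_fst[of "top_of_set {0..1::real}" X] by (simp add: continuous_map_in_subtopology)

lemma isotopic_refl:
  assumes "homeomorphic_map X X f"
  shows "isotopic X f f"
  unfolding isotopic_def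
proof (intro exI[of _ "\<lambda>z. f (snd z)"] conjI ballI)
  show "continuous_map (prod_topology (top_of_set {0..1}) X) X (\<lambda>z. f (snd z))"
    using continuous_map_compose[OF continuous_map_snd homeomorphic_imp_continuous_map[OF assms]]
    by (simp add: o_def)
qed (use assms in auto)

lemma isotopic_sym:
  assumes "isotopic X f h"
  shows "isotopic X h f"
proof -
  let ?P = "prod_topology (top_of_set {0..1::real}) X"
  obtain H where H: "continuous_map ?P X H" "\<forall>x\<in>topspace X. H (0, x) = f x \<and> H (1, x) = h x"
    "\<forall>t\<in>{0..1}. homeomorphic_map X X (\<lambda>x. H (t, x))"
    using assms unfolding isotopic_def by blast
  have "continuous_map ?P ?P (\<lambda>z. (1 - fst z, snd z))"
  proof (rule continuous_map_pairedI)
    show "continuous_map ?P (top_of_set {0..1}) (\<lambda>z. 1 - fst z)"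
      by (auto simp: continuous_map_in_subtopology intro!: continuous_intros continuous_map_fst_unit_interval)
  qed (rule continuous_map_snd)
  then have "continuous_map ?P X (\<lambda>z. H (1 - fst z, snd z))"
    using continuous_map_compose[OF _ H(1)] by (simp add: o_def)
  moreover have "homeomorphic_map X X (\<lambda>x. H (1 - t, x))" if "t \<in> {0..1}" for t :: real
    using H(3) that by simp
  ultimately show ?thesis
    unfolding isotopic_def using H(2) by (intro exI[of _ "\<lambda>z. H (1 - fst z, snd z)"]) auto
qed

lemma isotopic_trans:
  assumes "isotopic X f h" "isotopic X h l"
  shows "isotopic X f l"
proof -
  let ?P = "prod_topology (top_of_set {0..1::real}) X"
  obtain H where H: "continuous_map ?P X H" "\<forall>x\<in>topspace X. H (0, x) = f x \<and> H (1, x) = h x"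
    "\<forall>t\<in>{0..1}. homeomorphic_map X X (\<lambda>x. H (t, x))"
    using assms(1) unfolding isotopic_def by blast
  obtain K where K: "continuous_map ?P X K" "\<forall>x\<in>topspace X. K (0, x) = h x \<and> K (1, x) = l x"
    "\<forall>t\<in>{0..1}. homeomorphic_map X X (\<lambda>x. K (t, x))"
    using assms(2) unfolding isotopic_def by blast
  define L where "L = (\<lambda>z. if fst z \<le> 1/2 then H (2 * fst z, snd z) else K (2 * fst z - 1, snd z))"
  have rescale: "continuous_map (subtopology ?P {z \<in> topspace ?P. P (fst z)}) ?P (\<lambda>z. (r (fst z), snd z))"
    if "continuous_map ?P euclideanreal (\<lambda>z. r (fst z))" "\<And>t. t \<in> {0..1} \<Longrightarrow> P t \<Longrightarrow> r t \<in> {0..1}" for P r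
  proof (rule continuous_map_pairedI)
    show "continuous_map (subtopology ?P {z \<in> topspace ?P. P (fst z)}) (top_of_set {0..1}) (\<lambda>z. r (fst z))"
      using that by (auto simp: continuous_map_in_subtopology continuous_map_from_subtopology)
    show "continuous_map (subtopology ?P {z \<in> topspace ?P. P (fst z)}) X snd"
      by (rule continuous_map_from_subtopology[OF continuous_map_snd])
  qed
  have "continuous_map ?P X L"
    unfolding L_def
  proof (rule continuous_map_cases_le)
    show "continuous_map ?P euclideanreal fst"
      by (rule continuous_map_fst_unit_interval)
    show "continuous_map (subtopology ?P {z \<in> topspace ?P. fst z \<le> 1/2}) X (\<lambda>z. H (2 * fst z, snd z))"
      using continuous_map_compose[OF rescale[of "\<lambda>t. 2 * t" "\<lambda>t. t \<le> 1/2"] H(1)]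
      by (simp add: o_def continuous_intros continuous_map_fst_unit_interval)
    show "continuous_map (subtopology ?P {z \<in> topspace ?P. 1/2 \<le> fst z}) X (\<lambda>z. K (2 * fst z - 1, snd z))"
      using continuous_map_compose[OF rescale[of "\<lambda>t. 2 * t - 1" "\<lambda>t. 1/2 \<le> t"] K(1)]
      by (simp add: o_def continuous_intros continuous_map_fst_unit_interval)
    show "H (2 * fst z, snd z) = K (2 * fst z - 1, snd z)" if "z \<in> topspace ?P" "fst z = 1/2" for z
    proof -
      have "snd z \<in> topspace X" "2 * fst z = 1" "2 * fst z - 1 = 0"
        using that by (auto simp: topspace_prod_topology)
      then show ?thesis
        using H(2) K(2) by simp
    qed
  qed simp
  moreover have "homeomorphic_map X X (\<lambda>x. L (t, x))" if "t \<in> {0..1}" for t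
    using that H(3) K(3) by (cases "t \<le> 1/2") (auto simp: L_def)
  ultimately show ?thesis
    unfolding isotopic_def using H(2) K(2) by (intro exI[of _ L]) (auto simp: L_def)
qed

lemma isotopic_compose:
  assumes "isotopic X f f'" "isotopic X g g'"
  shows "isotopic X (compose (topspace X) f g) (compose (topspace X) f' g')"
proof -
  let ?P = "prod_topology (top_of_set {0..1::real}) X"
  obtain H where H: "continuous_map ?P X H" "\<forall>x\<in>topspace X. H (0, x) = f x \<and> H (1, x) = f' x"
    "\<forall>t\<in>{0..1}. homeomorphic_map X X (\<lambda>x. H (t, x))"
    using assms(1) unfolding isotopic_def by blast
  obtain K where K: "continuous_map ?P X K" "\<forall>x\<in>topspace X. K (0, x) = g x \<and> K (1, x) = g' x"
    "\<forall>t\<in>{0..1}. homeomorphic_map X X (\<lambda>x. K (t, x))"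
    using assms(2) unfolding isotopic_def by blast
  have "continuous_map ?P X (\<lambda>z. H (fst z, K z))"
    using continuous_map_compose[OF continuous_map_pairedI[OF continuous_map_fst K(1)] H(1)]
    by (simp add: o_def)
  moreover have "homeomorphic_map X X (\<lambda>x. H (t, K (t, x)))" if "t \<in> {0..1}" for t
    using homeomorphic_map_compose[OF K(3)[rule_format, OF that] H(3)[rule_format, OF that]]
    by (simp add: o_def)
  moreover have "g x \<in> topspace X" "g' x \<in> topspace X" if "x \<in> topspace X" for x
  proof -
    have "(0::real, x) \<in> topspace ?P" "(1::real, x) \<in> topspace ?P"
      using that by (auto simp: topspace_prod_topology)
    then have "K (0, x) \<in> topspace X" "K (1, x) \<in> topspace X"
      using continuous_map_image_subset_topspace[OF K(1)] by blast+
    then show "g x \<in> topspace X" "g' x \<in> topspace X"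
      using K(2) that by auto
  qed
  ultimately show ?thesis
    unfolding isotopic_def using H(2) K(2)
    by (intro exI[of _ "\<lambda>z. H (fst z, K z)"]) (auto simp: compose_def)
qed

lemma orient_pres_homeos_continuous: "f \<in> orient_pres_homeos X \<Longrightarrow> continuous_map X X f"
  by (simp add: orient_pres_homeos_def homeomorphic_imp_continuous_map)

lemma compose_orient_pres_homeos:
  assumes f: "f \<in> orient_pres_homeos X" and g: "g \<in> orient_pres_homeos X"
  shows "compose (topspace X) f g \<in> orient_pres_homeos X"
proof -
  have "homeomorphic_map X X (f \<circ> g)"
    using f g homeomorphic_map_compose by (auto simp: orient_pres_homeos_def)
  then have "homeomorphic_map X X (compose (topspace X) f g)"
    by (rule homeomorphic_map_eq) (simp add: compose_def)
  moreover have "hom_induced 2 X {} X {} (compose (topspace X) f g) c = c"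
    if "c \<in> carrier (homology_group 2 X)" for c
    using f g that
    by (simp add: hom_induced_compose_topspace orient_pres_homeos_continuous) (simp add: orient_pres_homeos_def)
  ultimately show ?thesis
    by (simp add: orient_pres_homeos_def compose_extensional)
qed

lemma restrict_id_orient_pres_homeos: "restrict id (topspace X) \<in> orient_pres_homeos X"
proof -
  have "homeomorphic_map X X (restrict id (topspace X))"
    by (rule homeomorphic_map_eq[of X X id]) (simp_all add: homeomorphic_map_id)
  moreover have "hom_induced 2 X {} X {} (restrict id (topspace X)) c = c"
    if "c \<in> carrier (homology_group 2 X)" for c
    using that by (intro hom_induced_id_gen) (auto intro: continuous_map_eq[OF continuous_map_id])
  ultimately show ?thesis
    by (simp add: orient_pres_homeos_def)
qed

lemma orient_pres_homeos_inverse: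
  assumes f: "f \<in> orient_pres_homeos X" and fh: "homeomorphic_maps X X f h"
  shows "restrict h (topspace X) \<in> orient_pres_homeos X"
proof -
  have "homeomorphic_map X X (restrict h (topspace X))"
  proof (rule homeomorphic_map_eq)
    show "homeomorphic_map X X h"
      using fh homeomorphic_maps_map by blast
  qed simp
  moreover have "hom_induced 2 X {} X {} (restrict h (topspace X)) c = c"
    if c: "c \<in> carrier (homology_group 2 X)" for c
  proof -
    have "hom_induced 2 X {} X {} (restrict h (topspace X)) = hom_induced 2 X {} X {} h"
      by (rule hom_induced_eq) simp
    moreover have "hom_induced 2 X {} X {} f (hom_induced 2 X {} X {} h c) = hom_induced 2 X {} X {} h c"
      using f hom_induced_carrier[of 2 X "{}" X "{}" h c] by (simp add: orient_pres_homeos_def)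
    ultimately show ?thesis
      using hom_induced_inverse[OF fh c] by simp
  qed
  ultimately show ?thesis
    by (simp add: orient_pres_homeos_def)
qed

lemma orient_pres_homeos_inverseE:
  assumes "f \<in> orient_pres_homeos X"
  obtains h where "homeomorphic_maps X X f h"
  using assms homeomorphic_map_maps that unfolding orient_pres_homeos_def by blast

lemma compose_restrict_inverse:
  assumes "homeomorphic_maps X X f h"
  shows "compose (topspace X) (restrict h (topspace X)) f = restrict id (topspace X)"
proof (rule ext)
  fix x
  have "x \<in> topspace X \<Longrightarrow> f x \<in> topspace X \<and> h (f x) = x"
    using assms continuous_map_image_subset_topspace unfolding homeomorphic_maps_def by blast
  then show "compose (topspace X) (restrict h (topspace X)) f x = restrict id (topspace X) x"
    by (simp add: compose_def)
qed

lemma mclass_self: "f \<in> orient_pres_homeos X \<Longrightarrow> f \<in> mclass X f"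
  by (simp add: mclass_def isotopic_refl orient_pres_homeos_def)

lemma mclass_eq: "isotopic X f f' \<Longrightarrow> mclass X f = mclass X f'"
  unfolding mclass_def using isotopic_sym isotopic_trans by blast

lemma carrier_MCG: "carrier (MCG X) = mclass X ` orient_pres_homeos X"
  by (simp add: MCG_def)

lemma one_MCG: "\<one>\<^bsub>MCG X\<^esub> = mclass X (restrict id (topspace X))"
  by (simp add: MCG_def)

lemma MCG_carrier_representative:
  assumes "C \<in> carrier (MCG X)" "f \<in> C"
  shows "f \<in> orient_pres_homeos X" "C = mclass X f"
proof -
  obtain f0 where C: "C = mclass X f0"
    using assms(1) by (auto simp: carrier_MCG)
  then show "f \<in> orient_pres_homeos X"
    using assms(2) by (simp add: mclass_def)
  have "isotopic X f0 f"
    using assms(2) C by (simp add: mclass_def)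
  then show "C = mclass X f"
    unfolding C by (rule mclass_eq)
qed

lemma mclass_in_carrier: "f \<in> orient_pres_homeos X \<Longrightarrow> mclass X f \<in> carrier (MCG X)"
  by (simp add: carrier_MCG)

text \<open>The product in \<open>MCG\<close> composes arbitrary representatives chosen by \<open>SOME\<close>; isotopy
  invariance of composition makes the choice irrelevant.\<close>

lemma mult_mclass:
  assumes f: "f \<in> orient_pres_homeos X" and g: "g \<in> orient_pres_homeos X"
  shows "mclass X f \<otimes>\<^bsub>MCG X\<^esub> mclass X g = mclass X (compose (topspace X) f g)"
proof -
  have "(SOME h. h \<in> mclass X f) \<in> mclass X f" "(SOME h. h \<in> mclass X g) \<in> mclass X g"
    using someI[of "\<lambda>h. h \<in> mclass X f", OF mclass_self[OF f]]
      someI[of "\<lambda>h. h \<in> mclass X g", OF mclass_self[OF g]] by simp_all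
  then have "isotopic X f (SOME h. h \<in> mclass X f)" "isotopic X g (SOME h. h \<in> mclass X g)"
    by (simp_all add: mclass_def)
  then have "isotopic X (compose (topspace X) f g)
      (compose (topspace X) (SOME h. h \<in> mclass X f) (SOME h. h \<in> mclass X g))"
    by (rule isotopic_compose)
  then show ?thesis
    by (simp add: MCG_def mclass_eq)
qed

lemma group_MCG: "group (MCG X)"
proof (rule groupI)
  fix A B assume "A \<in> carrier (MCG X)" "B \<in> carrier (MCG X)"
  then obtain f g where "f \<in> orient_pres_homeos X" "g \<in> orient_pres_homeos X" "A = mclass X f" "B = mclass X g"
    by (auto simp: carrier_MCG)
  then show "A \<otimes>\<^bsub>MCG X\<^esub> B \<in> carrier (MCG X)"
    by (simp add: mult_mclass compose_orient_pres_homeos mclass_in_carrier)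
next
  show "\<one>\<^bsub>MCG X\<^esub> \<in> carrier (MCG X)"
    by (simp add: one_MCG mclass_in_carrier restrict_id_orient_pres_homeos)
next
  fix A B C assume "A \<in> carrier (MCG X)" "B \<in> carrier (MCG X)" "C \<in> carrier (MCG X)"
  then obtain f g h where fgh: "f \<in> orient_pres_homeos X" "g \<in> orient_pres_homeos X" "h \<in> orient_pres_homeos X"
    and "A = mclass X f" "B = mclass X g" "C = mclass X h"
    by (auto simp: carrier_MCG)
  moreover have "compose (topspace X) (compose (topspace X) f g) h = compose (topspace X) f (compose (topspace X) g h)"
    by (rule compose_assoc[symmetric, OF continuous_map_funspace[OF orient_pres_homeos_continuous[OF fgh(3)]]])
  ultimately show "A \<otimes>\<^bsub>MCG X\<^esub> B \<otimes>\<^bsub>MCG X\<^esub> C = A \<otimes>\<^bsub>MCG X\<^esub> (B \<otimes>\<^bsub>MCG X\<^esub> C)"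
    by (simp add: mult_mclass compose_orient_pres_homeos)
next
  fix A assume "A \<in> carrier (MCG X)"
  then obtain f where f: "f \<in> orient_pres_homeos X" "A = mclass X f"
    by (auto simp: carrier_MCG)
  moreover have "compose (topspace X) (restrict id (topspace X)) f = f"
    using Id_compose[OF continuous_map_funspace[OF orient_pres_homeos_continuous[OF f(1)]]] f(1)
    by (simp add: orient_pres_homeos_def id_def)
  ultimately show "\<one>\<^bsub>MCG X\<^esub> \<otimes>\<^bsub>MCG X\<^esub> A = A"
    by (simp add: one_MCG mult_mclass restrict_id_orient_pres_homeos)
next
  fix A assume "A \<in> carrier (MCG X)"
  then obtain f where f: "f \<in> orient_pres_homeos X" "A = mclass X f"
    by (auto simp: carrier_MCG)
  obtain h where fh: "homeomorphic_maps X X f h"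
    using orient_pres_homeos_inverseE[OF f(1)] .
  have "mclass X (restrict h (topspace X)) \<otimes>\<^bsub>MCG X\<^esub> A = \<one>\<^bsub>MCG X\<^esub>"
    using f orient_pres_homeos_inverse[OF f(1) fh]
    by (simp add: one_MCG mult_mclass compose_restrict_inverse[OF fh])
  then show "\<exists>B\<in>carrier (MCG X). B \<otimes>\<^bsub>MCG X\<^esub> A = \<one>\<^bsub>MCG X\<^esub>"
    using mclass_in_carrier[OF orient_pres_homeos_inverse[OF f(1) fh]] by blast
qed

lemma inv_mclass:
  assumes f: "f \<in> orient_pres_homeos X" and fh: "homeomorphic_maps X X f h"
  shows "inv\<^bsub>MCG X\<^esub> (mclass X f) = mclass X (restrict h (topspace X))"
proof (rule group.inv_equality[OF group_MCG])
  show "mclass X (restrict h (topspace X)) \<otimes>\<^bsub>MCG X\<^esub> mclass X f = \<one>\<^bsub>MCG X\<^esub>"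
    using f orient_pres_homeos_inverse[OF f fh]
    by (simp add: one_MCG mult_mclass compose_restrict_inverse[OF fh])
qed (use f orient_pres_homeos_inverse[OF f fh] in \<open>simp_all add: mclass_in_carrier\<close>)

definition mapping_classes_with :: "'a topology \<Rightarrow> (('a \<Rightarrow> 'a) \<Rightarrow> bool) \<Rightarrow> ('a \<Rightarrow> 'a) set set" where
  "mapping_classes_with X P = {C \<in> carrier (MCG X). \<exists>f\<in>C. P f}"

lemma mapping_classes_withE:
  assumes "C \<in> mapping_classes_with X P"
  obtains f where "f \<in> orient_pres_homeos X" "C = mclass X f" "P f"
  using assms MCG_carrier_representative unfolding mapping_classes_with_def by blast

lemma mclass_in_mapping_classes_with:
  "f \<in> orient_pres_homeos X \<Longrightarrow> P f \<Longrightarrow> mclass X f \<in> mapping_classes_with X P"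
  unfolding mapping_classes_with_def using mclass_in_carrier mclass_self by blast

lemma subgroup_mapping_classes_with:
  assumes id: "P (restrict id (topspace X))"
    and compose: "\<And>f g. \<lbrakk>f \<in> orient_pres_homeos X; g \<in> orient_pres_homeos X; P f; P g\<rbrakk>
                          \<Longrightarrow> P (compose (topspace X) f g)"
    and inverse: "\<And>f h. \<lbrakk>f \<in> orient_pres_homeos X; homeomorphic_maps X X f h; P f\<rbrakk>
                          \<Longrightarrow> P (restrict h (topspace X))"
  shows "subgroup (mapping_classes_with X P) (MCG X)"
proof (rule group.subgroupI[OF group_MCG])
  show "mapping_classes_with X P \<subseteq> carrier (MCG X)"
    by (auto simp: mapping_classes_with_def)
  show "mapping_classes_with X P \<noteq> {}"
    using mclass_in_mapping_classes_with[where P = P, OF restrict_id_orient_pres_homeos id] by blast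
next
  fix C assume "C \<in> mapping_classes_with X P"
  then obtain f where f: "f \<in> orient_pres_homeos X" "C = mclass X f" "P f"
    by (rule mapping_classes_withE)
  obtain h where fh: "homeomorphic_maps X X f h"
    using orient_pres_homeos_inverseE[OF f(1)] .
  show "inv\<^bsub>MCG X\<^esub> C \<in> mapping_classes_with X P"
    unfolding f(2) inv_mclass[OF f(1) fh]
    by (rule mclass_in_mapping_classes_with[where P = P, OF orient_pres_homeos_inverse[OF f(1) fh] inverse[OF f(1) fh f(3)]])
next
  fix C D assume "C \<in> mapping_classes_with X P" "D \<in> mapping_classes_with X P"
  then obtain f g where f: "f \<in> orient_pres_homeos X" "C = mclass X f" "P f"
    and g: "g \<in> orient_pres_homeos X" "D = mclass X g" "P g"
    by (elim mapping_classes_withE)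
  show "C \<otimes>\<^bsub>MCG X\<^esub> D \<in> mapping_classes_with X P"
    unfolding f(2) g(2) mult_mclass[OF f(1) g(1)]
    by (rule mclass_in_mapping_classes_with[where P = P, OF compose_orient_pres_homeos[OF f(1) g(1)] compose[OF f(1) g(1) f(3) g(3)]])
qed

lemma normal_mapping_classes_with:
  assumes subgroup: "subgroup (mapping_classes_with X P) (MCG X)"
    and conjugate: "\<And>f u v. \<lbrakk>f \<in> orient_pres_homeos X; u \<in> orient_pres_homeos X; homeomorphic_maps X X u v; P f\<rbrakk>
                            \<Longrightarrow> P (compose (topspace X) (compose (topspace X) u f) v)"
  shows "mapping_classes_with X P \<lhd> MCG X"
  unfolding group.normal_inv_iff[OF group_MCG]
proof (intro conjI ballI subgroup)
  fix A C assume "A \<in> carrier (MCG X)" "C \<in> mapping_classes_with X P"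
  moreover obtain u where u: "u \<in> orient_pres_homeos X" "A = mclass X u"
    using \<open>A \<in> carrier (MCG X)\<close> by (auto simp: carrier_MCG)
  ultimately obtain f where f: "f \<in> orient_pres_homeos X" "C = mclass X f" "P f"
    by (elim mapping_classes_withE)
  obtain v where uv: "homeomorphic_maps X X u v"
    using orient_pres_homeos_inverseE[OF u(1)] .
  have v: "restrict v (topspace X) \<in> orient_pres_homeos X"
    by (rule orient_pres_homeos_inverse[OF u(1) uv])
  have "compose (topspace X) (compose (topspace X) u f) (restrict v (topspace X))
      = compose (topspace X) (compose (topspace X) u f) v"
    by (rule ext) (simp add: compose_def)
  then show "A \<otimes>\<^bsub>MCG X\<^esub> C \<otimes>\<^bsub>MCG X\<^esub> inv\<^bsub>MCG X\<^esub> A \<in> mapping_classes_with X P"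
    unfolding u(2) f(2) inv_mclass[OF u(1) uv] mult_mclass[OF u(1) f(1)]
      mult_mclass[OF compose_orient_pres_homeos[OF u(1) f(1)] v]
    using mclass_in_mapping_classes_with[where P = P, OF compose_orient_pres_homeos[OF compose_orient_pres_homeos[OF u(1) f(1)] v]]
      conjugate[OF f(1) u(1) uv f(3)]
    by simp
qed

lemma level_subgroup_normal: "level_subgroup X k \<lhd> MCG X"
proof -
  have level: "level_subgroup X k = mapping_classes_with X (acts_trivially_mod X k)"
    by (simp add: level_subgroup_def mapping_classes_with_def)
  have "subgroup (level_subgroup X k) (MCG X)"
    unfolding level
  proof (rule subgroup_mapping_classes_with)
    show "acts_trivially_mod X k (restrict id (topspace X))"
      by (rule acts_trivially_mod_id)
    show "acts_trivially_mod X k (compose (topspace X) f g)"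
      if "f \<in> orient_pres_homeos X" "g \<in> orient_pres_homeos X" "acts_trivially_mod X k f" "acts_trivially_mod X k g" for f g
      using that by (simp add: acts_trivially_mod_compose orient_pres_homeos_continuous)
    show "acts_trivially_mod X k (restrict h (topspace X))"
      if "homeomorphic_maps X X f h" "acts_trivially_mod X k f" for f h
      using that by (simp add: acts_trivially_mod_restrict acts_trivially_mod_inverse)
  qed
  then show ?thesis
    unfolding level
    by (rule normal_mapping_classes_with) (simp add: acts_trivially_mod_conjugate orient_pres_homeos_continuous)
qed

lemma lifts_to_homeo_compose:
  assumes cov: "covering_map Y X p" and "lifts_to_homeo Y X p f" "lifts_to_homeo Y X p g"
  shows "lifts_to_homeo Y X p (compose (topspace X) f g)"
proof -
  obtain F G where F: "homeomorphic_map Y Y F" "\<forall>y\<in>topspace Y. p (F y) = f (p y)"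
    and G: "homeomorphic_map Y Y G" "\<forall>y\<in>topspace Y. p (G y) = g (p y)"
    using assms(2,3) by (auto simp: lifts_to_homeo_def)
  have "G y \<in> topspace Y" if "y \<in> topspace Y" for y
    using G(1) that homeomorphic_imp_continuous_map continuous_map_image_subset_topspace by blast
  then have "\<forall>y\<in>topspace Y. p ((F \<circ> G) y) = compose (topspace X) f g (p y)"
    using F(2) G(2) covering_map_in_topspace[OF cov] by (simp add: compose_def)
  then show ?thesis
    unfolding lifts_to_homeo_def using homeomorphic_map_compose[OF G(1) F(1)] by blast
qed

lemma lifts_to_homeo_inverse:
  assumes cov: "covering_map Y X p" and "lifts_to_homeo Y X p f" and fh: "homeomorphic_maps X X f h"
  shows "lifts_to_homeo Y X p (restrict h (topspace X))"
proof -
  obtain F where F: "homeomorphic_map Y Y F" "\<forall>y\<in>topspace Y. p (F y) = f (p y)"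
    using assms(2) by (auto simp: lifts_to_homeo_def)
  obtain F' where FF': "homeomorphic_maps Y Y F F'"
    using F(1) homeomorphic_map_maps by blast
  have "p (F' y) = restrict h (topspace X) (p y)" if y: "y \<in> topspace Y" for y
  proof -
    have F'y: "F' y \<in> topspace Y" "F (F' y) = y"
      using FF' y continuous_map_image_subset_topspace unfolding homeomorphic_maps_def by blast+
    then have "p y = f (p (F' y))"
      using F(2) by metis
    then show ?thesis
      using fh covering_map_in_topspace[OF cov y] covering_map_in_topspace[OF cov F'y(1)]
      by (simp add: homeomorphic_maps_def)
  qed
  then show ?thesis
    unfolding lifts_to_homeo_def using FF' homeomorphic_maps_map by blast
qed

lemma LMod_subgroup:
  assumes cov: "covering_map Y X p"
  shows "subgroup (LMod Y X p) (MCG X)"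
proof -
  have "LMod Y X p = mapping_classes_with X (lifts_to_homeo Y X p)"
    by (simp add: LMod_def mapping_classes_with_def)
  moreover have "lifts_to_homeo Y X p (restrict id (topspace X))"
    unfolding lifts_to_homeo_def
    by (intro exI[of _ id]) (simp add: homeomorphic_map_id covering_map_in_topspace[OF cov])
  ultimately show ?thesis
    using lifts_to_homeo_compose[OF cov] lifts_to_homeo_inverse[OF cov]
    by (simp add: subgroup_mapping_classes_with)
qed

lemma level_subgroup_subset_LMod:
  assumes cover: "cover_of_ker_phi Y X p g a b k" and surface: "closed_surface X"
    and ker: "loop_classes_in_homology X g a b" "g \<ge> 1" "homology_basis X g a b"
  shows "level_subgroup X k \<subseteq> LMod Y X p"
proof
  fix C assume "C \<in> level_subgroup X k"
  then obtain f where C: "C \<in> carrier (MCG X)" "f \<in> C" "acts_trivially_mod X k f"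
    by (auto simp: level_subgroup_def)
  obtain h where "homeomorphic_maps X X f h"
    using orient_pres_homeos_inverseE[OF MCG_carrier_representative(1)[OF C(1,2)]] .
  then have "lifts_to_homeo Y X p f"
    using acts_trivially_mod_lifts_to_homeo[OF cover surface ker] C(3) by blast
  then show "C \<in> LMod Y X p"
    unfolding LMod_def using C(1,2) by blast
qed

theorem corollary2p3:
  fixes X :: "'a topology" and Y :: "'b topology" and p :: "'b \<Rightarrow> 'a"
    and a b :: "nat \<Rightarrow> real \<Rightarrow> 'a" and g k :: nat
  assumes "g \<ge> 1" and "k \<ge> 2"
    and "orientable_closed_surface X"
    and "\<forall>i\<in>{1..g}. simple_closed_curve X (a i) \<and> simple_closed_curve X (b i)"
    and "homology_basis X g a b"
    and "cover_of_ker_phi Y X p g a b k"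
  shows "level_subgroup X k \<lhd> (MCG X)\<lparr>carrier := LMod Y X p\<rparr>"
proof -
  have surface: "closed_surface X"
    using assms(3) by (simp add: orientable_closed_surface_def)
  have loops: "loop_classes_in_homology X g a b"
    using assms(4) by (auto simp: loop_classes_in_homology_def simple_closed_curve_def intro!: loop_class_in_carrier)
  have cov: "covering_map Y X p"
    using assms(6) by (simp add: cover_of_ker_phi_def)
  have "level_subgroup X k \<subseteq> LMod Y X p"
    by (rule level_subgroup_subset_LMod[OF assms(6) surface loops assms(1,5)])
  then show ?thesis
    by (rule group.normal_restrict_supergroup[OF group_MCG LMod_subgroup[OF cov] level_subgroup_normal])
qed

end
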